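(* In the setting below, assume that for every $\tau\in\pi_1(\mathcal R)$ the monodromy $M(\tau,\lambda)=\rho(\tau,\lambda)$ lies in $\Lambda\mathrm{SU}_{1,1\sigma}$ and $M(\tau,1)=\mathrm{id}$. Let $\hat f$ be the minimal surface in $\mathrm{Nil}_3$ defined on $\mathcal I_e$ (resp. $\mathcal I_\omega$) by the Sym formula at $\lambda=1$ applied to $F$ (resp. to $\tilde F\omega_0$). Then $\hat f(\tau.z)=\hat f(z)$ for all $z\in\mathcal I_e$ (resp. $\mathcal I_\omega$) and all $\tau\in\pi_1(\mathcal R)$ if and only if for all $\tau$: $X_\tau^o(\lambda=1)=0$ and $Y_\tau^d(\lambda=1)=0$, where $X_\tau=-i\lambda(\partial_\lambda M(\tau,\lambda))M(\tau,\lambda)^{-1}$ and $Y_\tau=-\tfrac12\lambda\partial_\lambda\big(\lambda(\partial_\lambda M(\tau,\lambda))M(\tau,\lambda)^{-1}\big)$, and superscripts $o,d$ denote off-diagonal and diagonal parts.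
   Context: $\sigma_3=\mathrm{diag}(1,-1)$. $\Lambda\mathrm{SL}_2\mathbb C_\sigma$: loops $g:\mathbb S^1\to\mathrm{SL}_2\mathbb C$ with $g(-\lambda)=\sigma_3g(\lambda)\sigma_3$; $\Lambda^+\mathrm{SL}_2\mathbb C_\sigma$: those extending holomorphically to $|\lambda|<1$; $\Lambda\mathrm{SU}_{1,1\sigma}$: those with $\sigma_3({}^t\overline{g(1/\bar\lambda)})^{-1}\sigma_3=g(\lambda)$. Setting: $\mathcal R$ connected non-compact Riemann surface, $\widetilde{\mathcal R}$ its universal cover with deck group $\pi_1(\mathcal R)$; $\eta$ a $\pi_1(\mathcal R)$-invariant holomorphic potential (holomorphic one-form with values in the Lie algebra of $\Lambda\mathrm{SL}_2\mathbb C_\sigma$); $C$ solves $dC=C\eta$ and $C(\tau.z,\lambda)=\rho(\tau,\lambda)C(z,\lambda)$. With $\omega_0=\begin{pmatrix}0&\lambda\\-\lambda^{-1}&0\end{pmatrix}$, $\mathcal I_e$ (resp. $\mathcal I_\omega$) is the set where $C\in\Lambda\mathrm{SU}_{1,1\sigma}\cdot\Lambda^+\mathrm{SL}_2\mathbb C_\sigma$ (resp. $\Lambda\mathrm{SU}_{1,1\sigma}\cdot\omega_0\cdot\Lambda^+\mathrm{SL}_2\mathbb C_\sigma$), with unique decompositions $C=FV_+$, $C=\tilde F\omega_0\tilde V_+$ normalized by positive diagonal of the plus factor at $\lambda=0$. Sym formula: for a $\Lambda\mathrm{SU}_{1,1\sigma}$-valued map $F$ put $f_{\mathbb L_3}=-i\lambda(\partial_\lambda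 F)F^{-1}-\tfrac i2F\sigma_3F^{-1}$ and $\hat f=(f_{\mathbb L_3})^o-\tfrac i2\lambda(\partial_\lambda f_{\mathbb L_3})^d$. At $\lambda=1$, $\hat f\in\mathfrak{su}_{1,1}$; writing $\hat f=x_1\mathcal E_1+x_2\mathcal E_2+x_3\mathcal E_3$ with $\mathcal E_1=\tfrac12\begin{pmatrix}0&i\\-i&0\end{pmatrix}$, $\mathcal E_2=\tfrac12\begin{pmatrix}0&-1\\-1&0\end{pmatrix}$, $\mathcal E_3=\tfrac12\begin{pmatrix}-i&0\\0&i\end{pmatrix}$, the surface is the map to $(x_1,x_2,x_3)\in\mathrm{Nil}_3$, where $\mathrm{Nil}_3$ is $\mathbb R^3$ with group law $(a_1,a_2,a_3)\cdot(x_1,x_2,x_3)=(a_1+x_1,a_2+x_2,a_3+x_3+\tfrac12(a_1x_2-a_2x_1))$. *)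

theory Defs
  imports "HOL-Analysis.Analysis" "HOL-Complex_Analysis.Complex_Analysis"
begin

type_synonym cmat = "complex^2^2"
type_synonym cloop = "complex \<Rightarrow> cmat"

definition mk2 :: "complex \<Rightarrow> complex \<Rightarrow> complex \<Rightarrow> complex \<Rightarrow> cmat" where
  "mk2 a b c d = (\<chi> i j. if i = 1 then (if j = 1 then a else b) else (if j = 1 then c else d))"

definition csm :: "complex \<Rightarrow> cmat \<Rightarrow> cmat" where
  "csm c M = (\<chi> i j. c * M$i$j)"

definition minv :: "cmat \<Rightarrow> cmat" where
  "minv M = csm (inverse (det M)) (mk2 (M$2$2) (- M$1$2) (- M$2$1) (M$1$1))"

definition ctr :: "cmat \<Rightarrow> cmat" where
  "ctr M = (\<chi> i j. cnj (M$j$i))"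

definition offd :: "cmat \<Rightarrow> cmat" where
  "offd M = (\<chi> i j. if i = j then 0 else M$i$j)"

definition diagp :: "cmat \<Rightarrow> cmat" where
  "diagp M = (\<chi> i j. if i = j then M$i$j else 0)"

definition sigma3 :: cmat where
  "sigma3 = mk2 1 0 0 (-1)"

definition omega0 :: cloop where
  "omega0 l = mk2 0 l (- inverse l) 0"

definition mat_holomorphic_on :: "cloop \<Rightarrow> complex set \<Rightarrow> bool" where
  "mat_holomorphic_on G S \<longleftrightarrow> (\<forall>i j. (\<lambda>\<mu>. G \<mu> $ i $ j) holomorphic_on S)"

definition twisted :: "cloop \<Rightarrow> bool" where
  "twisted g \<longleftrightarrow> (\<forall>l\<in>sphere 0 1. g (-l) = sigma3 ** g l ** sigma3)"

definition LoopSL :: "cloop set" where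
  "LoopSL = {g. continuous_on (sphere 0 1) g \<and> (\<forall>l\<in>sphere 0 1. det (g l) = 1) \<and> twisted g}"

definition LoopAlg :: "cloop set" where
  "LoopAlg = {a. continuous_on (sphere 0 1) a \<and> (\<forall>l\<in>sphere 0 1. trace (a l) = 0) \<and> twisted a}"

definition plus_ext :: "cloop \<Rightarrow> cloop \<Rightarrow> bool" where
  "plus_ext g G \<longleftrightarrow> mat_holomorphic_on G (ball 0 1) \<and> continuous_on (cball 0 1) G
     \<and> (\<forall>l\<in>sphere 0 1. G l = g l)"

definition LoopPlus :: "cloop set" where
  "LoopPlus = {g. g \<in> LoopSL \<and> (\<exists>G. plus_ext g G)}"

definition LoopPlusPos :: "cloop set" where
  "LoopPlusPos = {g. g \<in> LoopPlus \<and>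
     (\<exists>G. plus_ext g G \<and> (\<forall>i. G 0 $ i $ i \<in> \<real> \<and> Re (G 0 $ i $ i) > 0))}"

definition LoopSU :: "cloop set" where
  "LoopSU = {g. g \<in> LoopSL \<and>
     (\<forall>l\<in>sphere 0 1. sigma3 ** minv (ctr (g (1 / cnj l))) ** sigma3 = g l)}"

text \<open>For a loop g, (lambda d/dlambda g)(lambda) is computed along the circle:
  d/dt g(lambda e^{it}) at t = 0 equals i lambda g'(lambda).\<close>
definition ldl :: "cloop \<Rightarrow> cloop" where
  "ldl g l = csm (- \<i>) (vector_derivative (\<lambda>t::real. g (l * cis t)) (at 0))"

definition symL3 :: "cloop \<Rightarrow> cloop" where
  "symL3 F l = csm (- \<i>) (ldl F l ** minv (F l)) - csm (\<i> / 2) (F l ** sigma3 ** minv (F l))"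

definition symhat1 :: "cloop \<Rightarrow> cmat" where
  "symhat1 F = offd (symL3 F 1) - csm (\<i> / 2) (ldl (\<lambda>\<mu>. diagp (symL3 F \<mu>)) 1)"

definition Ie :: "complex set \<Rightarrow> (complex \<Rightarrow> cloop) \<Rightarrow> complex set" where
  "Ie D C = {z\<in>D. \<exists>F V. F \<in> LoopSU \<and> V \<in> LoopPlusPos \<and> (\<forall>l\<in>sphere 0 1. C z l = F l ** V l)}"

definition Fe :: "(complex \<Rightarrow> cloop) \<Rightarrow> complex \<Rightarrow> cloop" where
  "Fe C z = (SOME F. F \<in> LoopSU \<and> (\<exists>V. V \<in> LoopPlusPos \<and> (\<forall>l\<in>sphere 0 1. C z l = F l ** V l)))"

definition Iw :: "complex set \<Rightarrow> (complex \<Rightarrow> cloop) \<Rightarrow> complex set" where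
  "Iw D C = {z\<in>D. \<exists>F V. F \<in> LoopSU \<and> V \<in> LoopPlusPos \<and>
      (\<forall>l\<in>sphere 0 1. C z l = F l ** omega0 l ** V l)}"

definition Fw :: "(complex \<Rightarrow> cloop) \<Rightarrow> complex \<Rightarrow> cloop" where
  "Fw C z = (SOME F. F \<in> LoopSU \<and> (\<exists>V. V \<in> LoopPlusPos \<and>
      (\<forall>l\<in>sphere 0 1. C z l = F l ** omega0 l ** V l)))"

text \<open>Minimal surfaces (value of hat f at lambda = 1, an element of su(1,1)
  identified with Nil_3 via the basis E1,E2,E3)\<close>
definition fhat_e :: "(complex \<Rightarrow> cloop) \<Rightarrow> complex \<Rightarrow> cmat" where
  "fhat_e C z = symhat1 (Fe C z)"

definition fhat_w :: "(complex \<Rightarrow> cloop) \<Rightarrow> complex \<Rightarrow> cmat" where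
  "fhat_w C z = symhat1 (\<lambda>l. Fw C z l ** omega0 l)"

definition Xmon :: "cloop \<Rightarrow> cloop" where
  "Xmon M l = csm (- \<i>) (ldl M l ** minv (M l))"

definition Ymon :: "cloop \<Rightarrow> cloop" where
  "Ymon M l = csm (- 1 / 2) (ldl (\<lambda>\<mu>. ldl M \<mu> ** minv (M \<mu>)) l)"

section \<open>Setting: universal cover as a simply connected domain with deck group\<close>

definition deck_group :: "complex set \<Rightarrow> (complex \<Rightarrow> complex) set \<Rightarrow> bool" where
  "deck_group D \<Gamma> \<longleftrightarrow>
     id \<in> \<Gamma> \<and>
     (\<forall>\<sigma>\<in>\<Gamma>. \<forall>\<tau>\<in>\<Gamma>. \<sigma> \<circ> \<tau> \<in> \<Gamma>) \<and>
     (\<forall>\<tau>\<in>\<Gamma>. \<exists>\<sigma>\<in>\<Gamma>. \<forall>z\<in>D. \<sigma> (\<tau> z) = z \<and> \<tau> (\<sigma> z) = z) \<and>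
     (\<forall>\<tau>\<in>\<Gamma>. \<tau> holomorphic_on D \<and> \<tau> ` D = D \<and> inj_on \<tau> D) \<and>
     (\<forall>\<tau>\<in>\<Gamma>. \<forall>z\<in>D. \<tau> z = z \<longrightarrow> (\<forall>w\<in>D. \<tau> w = w)) \<and>
     (\<forall>z\<in>D. \<exists>U. open U \<and> z \<in> U \<and> U \<subseteq> D \<and>
         (\<forall>\<tau>\<in>\<Gamma>. (\<exists>w\<in>D. \<tau> w \<noteq> w) \<longrightarrow> \<tau> ` U \<inter> U = {}))"

definition noncompact_quotient :: "complex set \<Rightarrow> (complex \<Rightarrow> complex) set \<Rightarrow> bool" where
  "noncompact_quotient D \<Gamma> \<longleftrightarrow> \<not> (\<exists>K. compact K \<and> K \<subseteq> D \<and> (\<Union>\<tau>\<in>\<Gamma>. \<tau> ` K) = D)"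

end

theory Submission
  imports Defs
begin

text \<open>
  Write \<open>C(\<tau>.z) = M C(z)\<close> on the unit circle. The plus factor of an Iwasawa splitting is unique:
  the quotient of two plus factors is unitary on the circle, so by reflection in the circle and
  Liouville's theorem it is a constant, which the normalisation at \<open>\<lambda> = 0\<close> forces to be the identity.
  Hence the extended frame at \<open>\<tau>.z\<close> is \<open>M F\<close>. The same reflection shows that the plus factor \<open>V\<close>
  is entire, so \<open>F = C V\<^sup>-\<^sup>1\<close> and \<open>M F\<close> are restrictions of loops holomorphic near the circle and
  the Sym formula may be differentiated in \<open>\<lambda>\<close>. Using \<open>M(1) = id\<close>, the Sym formula of \<open>M F\<close> is
  that of \<open>F\<close> plus \<open>X\<close>, and its \<open>\<lambda>\<close>-derivative picks up \<open>Y\<close> and a commutator with \<open>\<lambda>M'(1)\<close>;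
  once the off-diagonal part of \<open>X(1)\<close> vanishes, that commutator has no diagonal part.
\<close>

no_notation fps_nth (infixl "$" 75)

section \<open>Algebra of complex 2x2 matrices\<close>

lemma cmat_eq_iff:
  "(A::cmat) = B \<longleftrightarrow> A$1$1 = B$1$1 \<and> A$1$2 = B$1$2 \<and> A$2$1 = B$2$1 \<and> A$2$2 = B$2$2"
  by (auto simp: vec_eq_iff forall_2)

lemma mk2_nth [simp]:
  "mk2 a b c d $1$1 = a" "mk2 a b c d $1$2 = b" "mk2 a b c d $2$1 = c" "mk2 a b c d $2$2 = d"
  by (simp_all add: mk2_def)

lemma cmat_mult_nth [simp]: "((A::cmat) ** B)$i$j = A$i$1 * B$1$j + A$i$2 * B$2$j"
  by (simp add: matrix_matrix_mult_def sum_2)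

lemma csm_nth [simp]: "csm c M $i$j = c * M$i$j"
  by (simp add: csm_def)

lemma ctr_nth [simp]: "ctr M $i$j = cnj (M$j$i)"
  by (simp add: ctr_def)

lemma offd_nth [simp]: "offd M $1$1 = 0" "offd M $2$2 = 0" "offd M $1$2 = M$1$2" "offd M $2$1 = M$2$1"
  by (simp_all add: offd_def)

lemma diagp_nth [simp]: "diagp M $1$1 = M$1$1" "diagp M $2$2 = M$2$2" "diagp M $1$2 = 0" "diagp M $2$1 = 0"
  by (simp_all add: diagp_def)

lemma mat_one_cmat_nth [simp]:
  "(mat 1::cmat) $1$1 = 1" "(mat 1::cmat) $2$2 = 1" "(mat 1::cmat) $1$2 = 0" "(mat 1::cmat) $2$1 = 0"
  by (simp_all add: mat_def)

lemma sigma3_nth [simp]: "sigma3 $1$1 = 1" "sigma3 $2$2 = -1" "sigma3 $1$2 = 0" "sigma3 $2$1 = 0"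
  by (simp_all add: sigma3_def)

lemma minv_nth [simp]:
  "minv M $1$1 = M$2$2 / det M" "minv M $2$2 = M$1$1 / det M"
  "minv M $1$2 = - M$1$2 / det M" "minv M $2$1 = - M$2$1 / det M"
  by (simp_all add: minv_def divide_inverse mult.commute)

lemma omega0_nth [simp]:
  "omega0 l $1$1 = 0" "omega0 l $2$2 = 0" "omega0 l $1$2 = l" "omega0 l $2$1 = - inverse l"
  by (simp_all add: omega0_def)

context
  fixes A B C :: cmat
begin

lemma cmat_add_rdistrib: "(A + B) ** C = A ** C + B ** C"
  by (simp add: cmat_eq_iff algebra_simps)

lemma cmat_diff_ldistrib: "A ** (B - C) = A ** B - A ** C"
  by (simp add: cmat_eq_iff algebra_simps)

lemma cmat_diff_rdistrib: "(A - B) ** C = A ** C - B ** C"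
  by (simp add: cmat_eq_iff algebra_simps)

lemma cmat_minus_right: "A ** (- B) = - (A ** B)"
  by (simp add: cmat_eq_iff)

lemma csm_mult_left: "csm c A ** B = csm c (A ** B)"
  by (simp add: cmat_eq_iff algebra_simps)

lemma csm_mult_right: "A ** csm c B = csm c (A ** B)"
  by (simp add: cmat_eq_iff algebra_simps)

lemma csm_add: "csm c (A + B) = csm c A + csm c B"
  by (simp add: cmat_eq_iff algebra_simps)

lemma csm_diff: "csm c (A - B) = csm c A - csm c B"
  by (simp add: cmat_eq_iff algebra_simps)

lemma csm_csm: "csm a (csm b A) = csm (a * b) A"
  by (simp add: cmat_eq_iff)

lemma csm_one [simp]: "csm 1 A = A"
  by (simp add: cmat_eq_iff)

lemma minv_left: "det A \<noteq> 0 \<Longrightarrow> minv A ** A = mat 1"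
  by (simp add: cmat_eq_iff divide_simps) (simp add: det_2 algebra_simps)

lemma minv_right: "det A \<noteq> 0 \<Longrightarrow> A ** minv A = mat 1"
  by (simp add: cmat_eq_iff divide_simps) (simp add: det_2 algebra_simps)

lemma ctr_mult: "ctr (A ** B) = ctr B ** ctr A"
  by (simp add: cmat_eq_iff mult.commute)

lemma det_ctr: "det (ctr A) = cnj (det A)"
  by (simp add: det_2)

end

lemma minv_left_cancel: "det A \<noteq> 0 \<Longrightarrow> minv A ** (A ** (B::cmat)) = B"
  by (simp add: matrix_mul_assoc minv_left)

lemma minv_right_cancel: "det A \<noteq> 0 \<Longrightarrow> A ** (minv A ** (B::cmat)) = B"
  by (simp add: matrix_mul_assoc minv_right)

lemma det_minv_nonzero: "det (A::cmat) \<noteq> 0 \<Longrightarrow> det (minv A) \<noteq> 0"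
  using det_mul[of "minv A" A] by (auto simp: minv_left)

lemma minv_mult:
  fixes A B :: cmat
  assumes "det A \<noteq> 0" "det B \<noteq> 0"
  shows "minv (A ** B) = minv B ** minv A"
proof -
  have "minv (A ** B) = minv (A ** B) ** ((A ** B) ** (minv B ** minv A))"
    using assms by (simp add: matrix_mul_assoc[symmetric] minv_right_cancel minv_right)
  also have "\<dots> = minv B ** minv A"
    by (rule minv_left_cancel) (simp add: det_mul assms)
  finally show ?thesis .
qed

lemma minv_mat_one [simp]: "minv (mat 1) = (mat 1::cmat)"
  by (simp add: cmat_eq_iff det_2)

lemma sigma3_mult_sigma3: "sigma3 ** sigma3 = mat 1"
  by (simp add: cmat_eq_iff)

definition adj2 :: "cmat \<Rightarrow> cmat" where
  "adj2 M = mk2 (M$2$2) (- M$1$2) (- M$2$1) (M$1$1)"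

lemma adj2_nth [simp]:
  "adj2 M $1$1 = M$2$2" "adj2 M $1$2 = - M$1$2" "adj2 M $2$1 = - M$2$1" "adj2 M $2$2 = M$1$1"
  by (simp_all add: adj2_def)

lemma det_adj2: "det (adj2 M) = det M"
  by (simp add: det_2 mult.commute)

lemma minv_eq_adj2: "det M = 1 \<Longrightarrow> minv M = adj2 M"
  by (simp add: cmat_eq_iff)

text \<open>The entry pattern of \<open>SU(1,1)\<close>: together with \<open>det A = 1\<close> it is equivalent to
  \<open>A\<^sup>* \<sigma>\<^sub>3 A = \<sigma>\<^sub>3\<close>, but unlike that identity it is closed under products without any
  determinant condition.\<close>
definition su11 :: "cmat \<Rightarrow> bool" where
  "su11 A \<longleftrightarrow> A$1$1 = cnj (A$2$2) \<and> A$2$1 = cnj (A$1$2)"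

lemma su11_iff_sigma3_conj:
  assumes "det A = 1"
  shows "sigma3 ** minv (ctr A) ** sigma3 = A \<longleftrightarrow> su11 A"
proof -
  have "det (ctr A) = 1" using assms by (simp add: det_ctr)
  moreover have cnj_eq: "cnj x = y \<longleftrightarrow> x = cnj y" for x y by auto
  ultimately show ?thesis
    by (simp add: cmat_eq_iff su11_def cnj_eq) auto
qed

lemma su11_mult: "su11 A \<Longrightarrow> su11 B \<Longrightarrow> su11 (A ** B)"
  by (simp add: su11_def)

lemma su11_minv: "su11 A \<Longrightarrow> det A = 1 \<Longrightarrow> su11 (minv A)"
  by (simp add: su11_def)

lemma su11_ctr_sigma3: "su11 A \<Longrightarrow> det A = 1 \<Longrightarrow> ctr A ** sigma3 ** A = sigma3"
  by (auto simp: su11_def cmat_eq_iff det_2 algebra_simps)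

lemma su11_positive_diagonal_eq_one:
  assumes "su11 A" "det A = 1" "A$1$2 = 0" "A$2$1 = 0"
    and "A$1$1 \<in> \<real>" "0 < Re (A$1$1)"
  shows "A = mat 1"
proof -
  obtain r where r: "A$1$1 = of_real r" using assms(5) by (auto elim: Reals_cases)
  have r22: "A$2$2 = of_real r" using assms(1) r by (simp add: su11_def complex_eq_iff)
  have "of_real (r * r) = (1::complex)" using assms(2-4) r r22 by (simp add: det_2)
  then have "(r - 1) * (r + 1) = 0" by (simp only: of_real_eq_1_iff) (simp add: algebra_simps)
  moreover have "r > 0" using assms(6) r by simp
  ultimately have "r = 1" by auto
  then show ?thesis using r r22 assms(3,4) by (simp add: cmat_eq_iff)
qed

definition mat_has_derivative :: "cloop \<Rightarrow> cmat \<Rightarrow> complex \<Rightarrow> bool" where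
  "mat_has_derivative f f' x \<longleftrightarrow> (\<forall>i j. ((\<lambda>y. f y $i$j) has_field_derivative f'$i$j) (at x))"

definition mat_deriv :: "cloop \<Rightarrow> cloop" where
  "mat_deriv g x = (\<chi> i j. deriv (\<lambda>y. g y $i$j) x)"

lemma mat_has_derivativeD:
  "mat_has_derivative f f' x \<Longrightarrow> ((\<lambda>y. f y $i$j) has_field_derivative f'$i$j) (at x)"
  by (simp add: mat_has_derivative_def)

lemma mat_has_derivative_mult:
  assumes "mat_has_derivative f f' x" "mat_has_derivative g g' x"
  shows "mat_has_derivative (\<lambda>y. f y ** g y) (f' ** g x + f x ** g') x"
  unfolding mat_has_derivative_def
proof (intro allI)
  fix i j :: 2
  note d = mat_has_derivativeD[OF assms(1)] mat_has_derivativeD[OF assms(2)]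
  show "((\<lambda>y. (f y ** g y) $i$j) has_field_derivative (f' ** g x + f x ** g')$i$j) (at x)"
    by simp (rule derivative_eq_intros d | simp add: algebra_simps)+
qed

lemma mat_has_derivative_add:
  "mat_has_derivative f f' x \<Longrightarrow> mat_has_derivative g g' x \<Longrightarrow>
    mat_has_derivative (\<lambda>y. f y + g y) (f' + g') x"
  unfolding mat_has_derivative_def by (auto intro!: derivative_eq_intros)

lemma mat_has_derivative_csm:
  "mat_has_derivative f f' x \<Longrightarrow> mat_has_derivative (\<lambda>y. csm c (f y)) (csm c f') x"
  unfolding mat_has_derivative_def by (auto intro!: derivative_eq_intros)

lemma mat_has_derivative_diagp:
  "mat_has_derivative f f' x \<Longrightarrow> mat_has_derivative (\<lambda>y. diagp (f y)) (diagp f') x"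
  unfolding mat_has_derivative_def diagp_def by (auto intro!: derivative_eq_intros)

lemma mat_has_derivative_minv:
  assumes "mat_has_derivative f f' x" "det (f x) \<noteq> 0"
  shows "mat_has_derivative (\<lambda>y. minv (f y)) (- (minv (f x) ** f' ** minv (f x))) x"
proof -
  note d = mat_has_derivativeD[OF assms(1)]
  define dD where "dD = f'$1$1 * f x$2$2 + f x$1$1 * f'$2$2 - (f'$1$2 * f x$2$1 + f x$1$2 * f'$2$1)"
  have dd: "((\<lambda>y. det (f y)) has_field_derivative dD) (at x)"
    unfolding det_2 dD_def by (rule derivative_eq_intros d | simp)+
  have q: "((\<lambda>y. N y / det (f y)) has_field_derivative
      (N' * det (f x) - N x * dD) / (det (f x) * det (f x))) (at x)"
    if "(N has_field_derivative N') (at x)" for N N'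
    using DERIV_divide[OF that dd assms(2)] by simp
  have q2: "((\<lambda>y. - N y / det (f y)) has_field_derivative
      (- N' * det (f x) + N x * dD) / (det (f x) * det (f x))) (at x)"
    if "(N has_field_derivative N') (at x)" for N N'
    using q[OF DERIV_minus[OF that]] by simp
  have nz: "f x$1$1 * f x$2$2 - f x$1$2 * f x$2$1 \<noteq> 0" using assms(2) by (simp add: det_2)
  show ?thesis unfolding mat_has_derivative_def forall_2 minv_nth
    by (intro conjI; rule DERIV_cong[OF q[OF d]] DERIV_cong[OF q2[OF d]],
        simp add: det_2 dD_def divide_simps nz, algebra)
qed

lemma mat_has_derivative_transform:
  assumes "mat_has_derivative f f' x" "open S" "x \<in> S" "\<forall>y\<in>S. f y = g y"
  shows "mat_has_derivative g f' x"
  unfolding mat_has_derivative_def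
proof (intro allI)
  fix i j
  show "((\<lambda>y. g y $ i $ j) has_field_derivative f' $ i $ j) (at x)"
    by (rule has_field_derivative_transform_within_open[OF mat_has_derivativeD[OF assms(1)] assms(2,3)])
       (use assms(4) in simp)
qed

lemma mat_deriv_eqI: "mat_has_derivative f f' x \<Longrightarrow> mat_deriv f x = f'"
  unfolding mat_has_derivative_def mat_deriv_def by (auto simp: vec_eq_iff intro: DERIV_imp_deriv)

lemma has_vector_derivative_vec_componentwise:
  fixes f :: "real \<Rightarrow> 'a::real_normed_vector ^ 'n"
  assumes "\<And>i. ((\<lambda>t. f t $ i) has_vector_derivative f' $ i) (at x)"
  shows "(f has_vector_derivative f') (at x)"
proof -
  have "((\<lambda>y. (1 / norm (y - x)) *\<^sub>R (f y $ i - (f x $ i + (y - x) *\<^sub>R f' $ i))) \<longlongrightarrow> 0) (at x)" for i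
    using assms[of i] unfolding has_vector_derivative_def has_derivative_within[of _ _ x UNIV] by simp
  then have "((\<lambda>y. (1 / norm (y - x)) *\<^sub>R (f y - (f x + (y - x) *\<^sub>R f'))) \<longlongrightarrow> 0) (at x)"
    by (intro vec_tendstoI) simp
  then show ?thesis
    unfolding has_vector_derivative_def has_derivative_within[of _ _ x UNIV]
    by (simp add: bounded_linear_scaleR_left)
qed

lemma mat_holomorphic_on_entry:
  "mat_holomorphic_on G S \<Longrightarrow> (\<lambda>z. G z $ i $ j) holomorphic_on S"
  by (simp add: mat_holomorphic_on_def)

lemma mat_holomorphic_on_has_derivative:
  assumes "mat_holomorphic_on g S" "open S" "x \<in> S"
  shows "mat_has_derivative g (mat_deriv g x) x"
  using assms unfolding mat_has_derivative_def mat_holomorphic_on_def mat_deriv_def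
  by (auto intro!: holomorphic_derivI)

lemma mat_holomorphic_on_deriv:
  "mat_holomorphic_on g S \<Longrightarrow> open S \<Longrightarrow> mat_holomorphic_on (mat_deriv g) S"
  unfolding mat_holomorphic_on_def mat_deriv_def by (auto intro!: holomorphic_deriv)

lemma mat_holomorphic_on_subset:
  "mat_holomorphic_on f S \<Longrightarrow> T \<subseteq> S \<Longrightarrow> mat_holomorphic_on f T"
  unfolding mat_holomorphic_on_def by (auto intro: holomorphic_on_subset)

lemma mat_holomorphic_on_const: "mat_holomorphic_on (\<lambda>x. c) S"
  unfolding mat_holomorphic_on_def by (auto intro!: holomorphic_intros)

lemma mat_holomorphic_on_mult:
  "mat_holomorphic_on f S \<Longrightarrow> mat_holomorphic_on g S \<Longrightarrow> mat_holomorphic_on (\<lambda>x. f x ** g x) S"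
  unfolding mat_holomorphic_on_def by (auto intro!: holomorphic_intros)

lemma mat_holomorphic_on_diff:
  "mat_holomorphic_on f S \<Longrightarrow> mat_holomorphic_on g S \<Longrightarrow> mat_holomorphic_on (\<lambda>x. f x - g x) S"
  unfolding mat_holomorphic_on_def by (auto intro!: holomorphic_intros)

lemma mat_holomorphic_on_csm:
  "c holomorphic_on S \<Longrightarrow> mat_holomorphic_on f S \<Longrightarrow> mat_holomorphic_on (\<lambda>x. csm (c x) (f x)) S"
  unfolding mat_holomorphic_on_def by (auto intro!: holomorphic_intros)

lemma mat_holomorphic_on_adj2:
  "mat_holomorphic_on f S \<Longrightarrow> mat_holomorphic_on (\<lambda>x. adj2 (f x)) S"
  unfolding mat_holomorphic_on_def forall_2 by (simp add: holomorphic_intros)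

lemma holomorphic_on_det:
  "mat_holomorphic_on f S \<Longrightarrow> (\<lambda>x. det (f x)) holomorphic_on S"
  unfolding mat_holomorphic_on_def det_2 by (auto intro!: holomorphic_intros)

lemma mat_holomorphic_on_minv:
  assumes "mat_holomorphic_on f S" "\<forall>x\<in>S. det (f x) \<noteq> 0"
  shows "mat_holomorphic_on (\<lambda>x. minv (f x)) S"
  using assms holomorphic_on_det[OF assms(1)] unfolding mat_holomorphic_on_def forall_2 minv_nth
  by (intro conjI holomorphic_on_divide holomorphic_on_minus) auto

lemma continuous_on_cmat_entries:
  assumes "\<forall>i j. continuous_on S (\<lambda>x. (f x :: cmat) $ i $ j)"
  shows "continuous_on S f"
proof -
  have "continuous_on S (\<lambda>z. \<chi> i j. f z $ i $ j)"
    using assms by (intro continuous_on_vec_lambda) auto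
  then show ?thesis by (simp add: vec_nth_inverse)
qed

lemma mat_holomorphic_on_imp_continuous_on:
  "mat_holomorphic_on f S \<Longrightarrow> continuous_on S f"
  unfolding mat_holomorphic_on_def
  by (intro continuous_on_cmat_entries holomorphic_on_imp_continuous_on allI) auto

lemma continuous_on_cmat_mult:
  fixes f g :: "'a::topological_space \<Rightarrow> cmat"
  shows "continuous_on S f \<Longrightarrow> continuous_on S g \<Longrightarrow> continuous_on S (\<lambda>x. f x ** g x)"
  unfolding matrix_matrix_mult_def by (intro continuous_intros)

lemma continuous_on_ctr: "continuous_on S f \<Longrightarrow> continuous_on S (\<lambda>x. ctr (f x))"
  unfolding ctr_def by (intro continuous_intros)

lemma continuous_on_adj2: "continuous_on S f \<Longrightarrow> continuous_on S (\<lambda>x. adj2 (f x))"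
  by (rule continuous_on_cmat_entries) (simp add: forall_2 continuous_intros)

lemma continuous_on_csm: "continuous_on S f \<Longrightarrow> continuous_on S (\<lambda>x. csm c (f x))"
  unfolding csm_def by (intro continuous_intros)

section \<open>The Sym formula of loops that are holomorphic near the circle\<close>

lemma ldl_eq_csm_derivative:
  assumes "mat_has_derivative g g' l"
  shows "ldl g l = csm l g'"
proof -
  have c: "((\<lambda>t::real. l * cis t) has_vector_derivative (l * \<i>)) (at 0)"
    using has_derivative_cis[OF has_derivative_ident, of 0 UNIV]
    by (auto intro!: derivative_eq_intros simp: has_vector_derivative_def)
  have "((\<lambda>t. g (l * cis t)) has_vector_derivative (csm (l * \<i>) g')) (at 0)"
  proof (intro has_vector_derivative_vec_componentwise)
    fix i j :: 2
    have "((\<lambda>y. g y $ i $ j) has_field_derivative g' $ i $ j) (at ((\<lambda>t::real. l * cis t) 0))"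
      using mat_has_derivativeD[OF assms] by simp
    from field_vector_diff_chain_at[OF c this]
    show "((\<lambda>t. g (l * cis t) $ i $ j) has_vector_derivative csm (l * \<i>) g' $ i $ j) (at 0)"
      by (simp add: o_def)
  qed
  moreover have "- (\<i> * (l * \<i> * x)) = l * x" for x
    by (simp add: algebra_simps)
  ultimately show ?thesis unfolding ldl_def
    by (simp add: vector_derivative_at vec_eq_iff csm_def)
qed

lemma ldl_cong_sphere:
  assumes "norm l = 1" "\<forall>x\<in>sphere 0 1. g x = h x"
  shows "ldl g l = ldl h l"
proof -
  have "(\<lambda>t. g (l * cis t)) = (\<lambda>t. h (l * cis t))"
    using assms by (auto simp: norm_mult)
  then show ?thesis unfolding ldl_def by simp
qed

definition right_log_deriv :: "cloop \<Rightarrow> cloop" where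
  "right_log_deriv g \<mu> = csm \<mu> (mat_deriv g \<mu>) ** minv (g \<mu>)"

text \<open>\<open>symL3\<close> with \<open>\<lambda>\<partial>\<^sub>\<lambda>\<close> computed by the complex derivative of a holomorphic extension.\<close>
definition symL3_holo :: "cloop \<Rightarrow> cloop" where
  "symL3_holo g \<mu> = csm (- \<i>) (right_log_deriv g \<mu>) - csm (\<i> / 2) (g \<mu> ** sigma3 ** minv (g \<mu>))"

lemma mat_holomorphic_on_right_log_deriv:
  assumes "open S" "mat_holomorphic_on g S" "\<forall>x\<in>S. det (g x) \<noteq> 0"
  shows "mat_holomorphic_on (right_log_deriv g) S"
  unfolding right_log_deriv_def[abs_def]
  by (intro mat_holomorphic_on_mult mat_holomorphic_on_csm mat_holomorphic_on_minv
      mat_holomorphic_on_deriv assms holomorphic_intros)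

lemma mat_holomorphic_on_symL3_holo:
  assumes "open S" "mat_holomorphic_on g S" "\<forall>x\<in>S. det (g x) \<noteq> 0"
  shows "mat_holomorphic_on (symL3_holo g) S"
  unfolding symL3_holo_def[abs_def]
  by (intro mat_holomorphic_on_diff mat_holomorphic_on_csm mat_holomorphic_on_mult
      mat_holomorphic_on_minv mat_holomorphic_on_right_log_deriv mat_holomorphic_on_const
      assms holomorphic_intros)

lemma ldl_eq_mat_deriv:
  assumes "open S" "sphere 0 1 \<subseteq> S" "mat_holomorphic_on g S" "\<forall>x\<in>sphere 0 1. F x = g x" "norm \<mu> = 1"
  shows "ldl F \<mu> = csm \<mu> (mat_deriv g \<mu>)"
proof -
  have "ldl F \<mu> = ldl g \<mu>" by (rule ldl_cong_sphere[OF assms(5,4)])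
  also have "\<dots> = csm \<mu> (mat_deriv g \<mu>)"
    by (rule ldl_eq_csm_derivative[OF mat_holomorphic_on_has_derivative[OF assms(3,1)]])
       (use assms in auto)
  finally show ?thesis .
qed

lemma symhat1_eq_symL3_holo:
  assumes "open S" "sphere 0 1 \<subseteq> S" "mat_holomorphic_on g S" "\<forall>x\<in>S. det (g x) \<noteq> 0"
    "\<forall>x\<in>sphere 0 1. F x = g x"
  shows "symhat1 F = offd (symL3_holo g 1) - csm (\<i> / 2) (diagp (mat_deriv (symL3_holo g) 1))"
proof -
  have symL3: "symL3 F \<mu> = symL3_holo g \<mu>" if "norm \<mu> = 1" for \<mu>
    using ldl_eq_mat_deriv[OF assms(1,2,3,5) that] assms(5) that
    by (simp add: symL3_def symL3_holo_def right_log_deriv_def)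
  have hS: "mat_holomorphic_on (\<lambda>\<mu>. diagp (symL3_holo g \<mu>)) S"
    using mat_holomorphic_on_symL3_holo[OF assms(1,3,4)] unfolding mat_holomorphic_on_def forall_2
    by (simp add: holomorphic_intros)
  have "ldl (\<lambda>\<mu>. diagp (symL3 F \<mu>)) 1 = mat_deriv (\<lambda>\<mu>. diagp (symL3_holo g \<mu>)) 1"
    using ldl_eq_mat_deriv[OF assms(1,2) hS, of _ 1] symL3 by simp
  also have "\<dots> = diagp (mat_deriv (symL3_holo g) 1)"
    using assms(2) by (intro mat_deriv_eqI mat_has_derivative_diagp mat_holomorphic_on_has_derivative[OF
          mat_holomorphic_on_symL3_holo[OF assms(1,3,4)] assms(1)]) auto
  finally show ?thesis unfolding symhat1_def using symL3[of 1] by simp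
qed

lemma symL3_holo_mult_pointwise:
  assumes "det (M::cmat) \<noteq> 0" "det G \<noteq> 0"
  shows "csm (- \<i>) (csm \<mu> (DM ** G + M ** DG) ** minv (M ** G)) - csm (\<i> / 2) (M ** G ** sigma3 ** minv (M ** G))
     = csm (- \<i>) (csm \<mu> DM ** minv M)
       + M ** (csm (- \<i>) (csm \<mu> DG ** minv G) - csm (\<i> / 2) (G ** sigma3 ** minv G)) ** minv M"
  using assms
  by (simp add: minv_mult matrix_mul_assoc[symmetric] matrix_add_ldistrib cmat_add_rdistrib
      cmat_diff_ldistrib cmat_diff_rdistrib csm_mult_left csm_mult_right csm_add csm_diff csm_csm
      minv_right_cancel)

lemma symL3_holo_left_mult:
  assumes S: "open S" "\<mu> \<in> S" and hM: "mat_holomorphic_on M S" and hG: "mat_holomorphic_on G S"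
    and dM: "det (M \<mu>) \<noteq> 0" and dG: "det (G \<mu>) \<noteq> 0"
  shows "symL3_holo (\<lambda>x. M x ** G x) \<mu>
    = csm (- \<i>) (right_log_deriv M \<mu>) + M \<mu> ** symL3_holo G \<mu> ** minv (M \<mu>)"
proof -
  have "mat_deriv (\<lambda>x. M x ** G x) \<mu> = mat_deriv M \<mu> ** G \<mu> + M \<mu> ** mat_deriv G \<mu>"
    by (rule mat_deriv_eqI[OF mat_has_derivative_mult[OF
          mat_holomorphic_on_has_derivative[OF hM S] mat_holomorphic_on_has_derivative[OF hG S]]])
  then show ?thesis
    using symL3_holo_mult_pointwise[OF dM dG, of \<mu> "mat_deriv M \<mu>" "mat_deriv G \<mu>"]
    by (simp add: symL3_holo_def right_log_deriv_def)
qed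

lemma symL3_holo_left_mult_at_one:
  assumes S: "open S" "1 \<in> S" and hM: "mat_holomorphic_on M S" and hG: "mat_holomorphic_on G S"
    and dM: "\<forall>x\<in>S. det (M x) \<noteq> 0" and dG: "\<forall>x\<in>S. det (G x) \<noteq> 0" and M1: "M 1 = mat 1"
  defines "SG \<equiv> symL3_holo G" and "M' \<equiv> mat_deriv M 1"
  shows "symL3_holo (\<lambda>x. M x ** G x) 1 = csm (- \<i>) M' + SG 1"
    and "mat_deriv (symL3_holo (\<lambda>x. M x ** G x)) 1
      = csm (- \<i>) (mat_deriv (right_log_deriv M) 1) + M' ** SG 1 + mat_deriv SG 1 - SG 1 ** M'"
proof -
  have gauge: "\<forall>\<mu>\<in>S. symL3_holo (\<lambda>x. M x ** G x) \<mu>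
      = csm (- \<i>) (right_log_deriv M \<mu>) + M \<mu> ** SG \<mu> ** minv (M \<mu>)"
    unfolding SG_def using symL3_holo_left_mult[OF S(1) _ hM hG] dM dG by blast
  then show "symL3_holo (\<lambda>x. M x ** G x) 1 = csm (- \<i>) M' + SG 1"
    using S(2) M1 by (simp add: right_log_deriv_def M'_def)
  note d = mat_holomorphic_on_has_derivative[OF _ S]
  have hSG: "mat_holomorphic_on SG S" unfolding SG_def by (rule mat_holomorphic_on_symL3_holo[OF S(1) hG dG])
  have dgauge: "mat_has_derivative (\<lambda>\<mu>. csm (- \<i>) (right_log_deriv M \<mu>) + M \<mu> ** SG \<mu> ** minv (M \<mu>))
     (csm (- \<i>) (mat_deriv (right_log_deriv M) 1) + ((M' ** SG 1 + M 1 ** mat_deriv SG 1) ** minv (M 1)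
        + M 1 ** SG 1 ** (- (minv (M 1) ** M' ** minv (M 1))))) 1"
    unfolding M'_def
    by (rule mat_has_derivative_add[OF mat_has_derivative_csm[OF
          d[OF mat_holomorphic_on_right_log_deriv[OF S(1) hM dM]]] mat_has_derivative_mult[OF
          mat_has_derivative_mult[OF d[OF hM] d[OF hSG]] mat_has_derivative_minv[OF d[OF hM]]]])
       (use dM S in auto)
  have "mat_deriv (symL3_holo (\<lambda>x. M x ** G x)) 1
      = csm (- \<i>) (mat_deriv (right_log_deriv M) 1) + ((M' ** SG 1 + M 1 ** mat_deriv SG 1) ** minv (M 1)
        + M 1 ** SG 1 ** (- (minv (M 1) ** M' ** minv (M 1))))"
    by (rule mat_deriv_eqI[OF mat_has_derivative_transform[OF dgauge S]]) (use gauge in auto)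
  then show "mat_deriv (symL3_holo (\<lambda>x. M x ** G x)) 1
      = csm (- \<i>) (mat_deriv (right_log_deriv M) 1) + M' ** SG 1 + mat_deriv SG 1 - SG 1 ** M'"
    unfolding M1 by (simp add: cmat_minus_right)
qed

lemma Xmon_Ymon_at_one:
  assumes S: "open S" "sphere 0 1 \<subseteq> S" and hM: "mat_holomorphic_on M S"
    and dM: "\<forall>x\<in>S. det (M x) \<noteq> 0" and R: "\<forall>x\<in>sphere 0 1. R x = M x" and M1: "M 1 = mat 1"
  shows "Xmon R 1 = csm (- \<i>) (mat_deriv M 1)"
    and "Ymon R 1 = csm (- 1 / 2) (mat_deriv (right_log_deriv M) 1)"
proof -
  have one: "1 \<in> S" using S(2) by auto
  have R1: "R 1 = mat 1" using R M1 by auto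
  then show "Xmon R 1 = csm (- \<i>) (mat_deriv M 1)"
    unfolding Xmon_def using ldl_eq_mat_deriv[OF S hM R, of 1] by simp
  have "ldl (\<lambda>\<mu>. ldl R \<mu> ** minv (R \<mu>)) 1 = ldl (right_log_deriv M) 1"
    by (rule ldl_cong_sphere) (use ldl_eq_mat_deriv[OF S hM R] R in \<open>auto simp: right_log_deriv_def\<close>)
  also have "\<dots> = mat_deriv (right_log_deriv M) 1"
    using ldl_eq_csm_derivative[OF mat_holomorphic_on_has_derivative[OF
          mat_holomorphic_on_right_log_deriv[OF S(1) hM dM] S(1) one]] by simp
  finally show "Ymon R 1 = csm (- 1 / 2) (mat_deriv (right_log_deriv M) 1)"
    unfolding Ymon_def by simp
qed

lemma symhat_difference_eq_zero_iff:
  "(offd (csm (- \<i>) P + S) - csm (\<i> / 2) (diagp (csm (- \<i>) Q + P ** S + T - S ** P))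
      = offd S - csm (\<i> / 2) (diagp T))
   \<longleftrightarrow> offd (csm (- \<i>) P) = 0 \<and> diagp (csm (- 1 / 2) Q) = 0"
  by (simp add: cmat_eq_iff algebra_simps) (auto simp: algebra_simps)

lemma symhat1_left_mult_eq_iff:
  assumes S: "open S" "sphere 0 1 \<subseteq> S"
    and hM: "mat_holomorphic_on M S" and hG: "mat_holomorphic_on G S"
    and dM: "\<forall>x\<in>S. det (M x) \<noteq> 0" and dG: "\<forall>x\<in>S. det (G x) \<noteq> 0" and M1: "M 1 = mat 1"
    and Fa: "\<forall>x\<in>sphere 0 1. Fa x = G x" and Fb: "\<forall>x\<in>sphere 0 1. Fb x = M x ** G x"
    and R: "\<forall>x\<in>sphere 0 1. R x = M x"
  shows "symhat1 Fb = symhat1 Fa \<longleftrightarrow> offd (Xmon R 1) = 0 \<and> diagp (Ymon R 1) = 0"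
proof -
  have one: "1 \<in> S" using S(2) by auto
  have "symhat1 Fb = offd (symL3_holo (\<lambda>x. M x ** G x) 1)
      - csm (\<i> / 2) (diagp (mat_deriv (symL3_holo (\<lambda>x. M x ** G x)) 1))"
    by (rule symhat1_eq_symL3_holo[OF S mat_holomorphic_on_mult[OF hM hG]])
       (use dM dG Fb in \<open>simp_all add: det_mul\<close>)
  moreover have "symhat1 Fa = offd (symL3_holo G 1) - csm (\<i> / 2) (diagp (mat_deriv (symL3_holo G) 1))"
    by (rule symhat1_eq_symL3_holo[OF S hG dG Fa])
  ultimately show ?thesis
    unfolding symL3_holo_left_mult_at_one[OF S(1) one hM hG dM dG M1] Xmon_Ymon_at_one[OF S hM dM R M1]
    by (simp only: symhat_difference_eq_zero_iff)
qed

section \<open>Holomorphic functions across the unit circle\<close>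

lemma holomorphic_on_exp_chart_across_circle:
  assumes U: "open U" and cf: "continuous_on U f" and hf: "f holomorphic_on (U - sphere 0 1)"
    and np: "norm p = 1"
  shows "(\<lambda>w. f (p * exp w)) holomorphic_on ((\<lambda>w. p * exp w) -` U)"
proof -
  define V where "V = (\<lambda>w. p * exp w) -` U"
  have oV: "open V" unfolding V_def
    by (rule open_vimage[OF U]) (auto intro!: continuous_intros)
  have cg: "continuous_on V (\<lambda>w. f (p * exp w))" unfolding V_def
    by (rule continuous_on_compose2[OF cf]) (auto intro!: continuous_intros)
  have off_axis: "(\<lambda>w. f (p * exp w)) holomorphic_on (V \<inter> {w. P (1 \<bullet> w)})"
    if "\<And>x. P x \<Longrightarrow> x \<noteq> 0" for P
  proof (rule holomorphic_on_compose_gen[unfolded o_def, OF _ hf])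
    show "(\<lambda>w. p * exp w) holomorphic_on V \<inter> {w. P (1 \<bullet> w)}" by (intro holomorphic_intros)
    show "(\<lambda>w. p * exp w) ` (V \<inter> {w. P (1 \<bullet> w)}) \<subseteq> U - sphere 0 1"
      using that by (auto simp: V_def norm_mult np inner_complex_def)
  qed
  show ?thesis
    using holomorphic_on_paste_across_line[OF oV one_neq_zero off_axis[of "\<lambda>x. x < 0"]
        off_axis[of "\<lambda>x. 0 < x"] cg]
    by (simp add: V_def)
qed

text \<open>Locally near a point \<open>p\<close> of the circle, \<open>f = g \<circ> Ln(\<cdot>/p)\<close> with \<open>g(w) = f(p e\<^sup>w)\<close>, and \<open>Ln(\<cdot>/p)\<close>
  maps the circle onto the imaginary axis, across which holomorphic functions can be pasted.\<close>
lemma holomorphic_on_removable_circle: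
  assumes U: "open U" and cf: "continuous_on U f" and hf: "f holomorphic_on (U - sphere 0 1)"
  shows "f holomorphic_on U"
proof -
  have "f field_differentiable (at p)" if pU: "p \<in> U" for p
  proof (cases "p \<in> sphere 0 1")
    case False
    have "open (U - sphere 0 1)" using U by (simp add: open_Diff)
    then show ?thesis using hf False pU holomorphic_on_imp_differentiable_at by blast
  next
    case True
    then have np: "norm p = 1" by simp
    then have p0: "p \<noteq> 0" by auto
    define g where "g = (\<lambda>w. f (p * exp w))"
    define W where "W = U \<inter> ball p 1"
    have oW: "open W" using U by (simp add: W_def open_Int)
    have pW: "p \<in> W" using pU by (simp add: W_def)
    have Re_pos: "0 < Re (z / p)" if "z \<in> W" for z
    proof -
      have "z / p - 1 = (z - p) / p" using p0 by (simp add: field_simps)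
      then have "norm (z / p - 1) = norm (z - p)" using np by (simp add: norm_divide)
      also have "\<dots> < 1" using that by (simp add: W_def dist_norm norm_minus_commute)
      finally have "\<bar>Re (z / p - 1)\<bar> < 1" using abs_Re_le_cmod le_less_trans by blast
      then show ?thesis by simp
    qed
    have "z / p \<notin> \<real>\<^sub>\<le>\<^sub>0" if "z \<in> W" for z
      using Re_pos[OF that] by (auto elim!: nonpos_Reals_cases)
    then have hL: "(\<lambda>z. Ln (z / p)) holomorphic_on W"
      by (intro holomorphic_intros) (use p0 in auto)
    have exp_Ln: "p * exp (Ln (z / p)) = z" if "z \<in> W" for z
    proof -
      have "z / p \<noteq> 0" using Re_pos[OF that] by auto
      then show ?thesis using p0 by simp
    qed
    have "(g \<circ> (\<lambda>z. Ln (z / p))) holomorphic_on W"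
      by (rule holomorphic_on_compose_gen[OF hL holomorphic_on_exp_chart_across_circle[OF U cf hf np,
            folded g_def]]) (auto simp: exp_Ln W_def)
    moreover have "\<forall>z\<in>W. (g \<circ> (\<lambda>z. Ln (z / p))) z = f z"
      by (simp add: g_def exp_Ln)
    ultimately have "f holomorphic_on W"
      using holomorphic_cong by (metis (no_types, lifting))
    then show ?thesis using holomorphic_on_imp_differentiable_at[OF _ oW pW] by blast
  qed
  then show ?thesis using U by (simp add: holomorphic_on_def field_differentiable_at_within)
qed

lemma holomorphic_on_glue_at_circle:
  fixes f g :: "complex \<Rightarrow> complex"
  assumes hf: "f holomorphic_on ball 0 1" and cf: "continuous_on (cball 0 1) f"
    and hg: "g holomorphic_on {z. 1 < norm z}" and cg: "continuous_on {z. 1 \<le> norm z} g"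
    and eq: "\<forall>z\<in>sphere 0 1. f z = g z"
  shows "(\<lambda>z. if norm z \<le> 1 then f z else g z) holomorphic_on UNIV"
proof (rule holomorphic_on_removable_circle)
  have "continuous_on (cball 0 1 \<union> {z. 1 \<le> norm z}) (\<lambda>z. if norm z \<le> 1 then f z else g z)"
    by (rule continuous_on_cases[OF _ _ cf cg])
       (use eq in \<open>auto simp: closed_Collect_le continuous_on_norm_id\<close>)
  moreover have "cball 0 1 \<union> {z. 1 \<le> norm z} = (UNIV :: complex set)" by auto
  ultimately show "continuous_on UNIV (\<lambda>z. if norm z \<le> 1 then f z else g z)" by simp
  have "(\<lambda>z. if norm z \<le> 1 then f z else g z) holomorphic_on (ball 0 1 \<union> {z. 1 < norm z})"
    by (intro holomorphic_on_Un holomorphic_transform[OF hf] holomorphic_transform[OF hg])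
       (auto simp: open_Collect_less continuous_on_norm_id)
  moreover have "ball 0 1 \<union> {z. 1 < norm z} = UNIV - sphere (0::complex) 1" by auto
  ultimately show "(\<lambda>z. if norm z \<le> 1 then f z else g z) holomorphic_on (UNIV - sphere 0 1)" by simp
qed simp

lemma cnj_eq_inverse_on_sphere:
  assumes "l \<in> sphere 0 1"
  shows "cnj l = inverse l"
proof -
  have "l * cnj l = 1" using complex_norm_square[of l] assms by simp
  then show ?thesis using inverse_unique by metis
qed

lemma holomorphic_on_reflection:
  assumes "g holomorphic_on A" "open A"
  shows "(\<lambda>z. cnj (g (1 / cnj z))) holomorphic_on {z. z \<noteq> 0 \<and> 1 / cnj z \<in> A}"
proof -
  have o: "open (cnj -` A)" by (rule open_vimage[OF assms(2)]) (auto intro: continuous_intros)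
  have "surj cnj" by (metis complex_cnj_cnj surjI)
  then have im: "cnj ` (cnj -` A) = A" by (simp add: image_vimage_eq)
  have h1: "(cnj \<circ> g \<circ> cnj) holomorphic_on (cnj -` A)"
    by (rule holomorphic_on_compose_cnj_cnj) (use assms im o in auto)
  have h2: "(\<lambda>z::complex. 1 / z) holomorphic_on {z. z \<noteq> 0 \<and> 1 / cnj z \<in> A}"
    by (intro holomorphic_intros) auto
  have "((cnj \<circ> g \<circ> cnj) \<circ> (\<lambda>z. 1 / z)) holomorphic_on {z. z \<noteq> 0 \<and> 1 / cnj z \<in> A}"
    by (rule holomorphic_on_compose_gen[OF h2 h1]) auto
  then show ?thesis by (simp add: o_def)
qed

lemma continuous_on_reflection_outside:
  assumes "continuous_on (cball 0 1) g"
  shows "continuous_on {z. 1 \<le> norm z} (\<lambda>z. g (1 / cnj z))"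
proof (rule continuous_on_compose2[OF assms])
  show "continuous_on {z. 1 \<le> norm z} (\<lambda>z::complex. 1 / cnj z)"
    by (intro continuous_intros) auto
qed (auto simp: norm_divide divide_le_eq_1)

lemma holomorphic_const_on_sphere_imp_const:
  assumes "h holomorphic_on ball 0 1" "continuous_on (cball 0 1) h" "\<forall>z\<in>sphere 0 1. h z = c"
  shows "\<forall>z\<in>cball 0 1. h z = (c::complex)"
proof
  fix z :: complex assume z: "z \<in> cball 0 1"
  show "h z = c"
  proof (cases "z \<in> sphere 0 1")
    case True then show ?thesis using assms(3) by auto
  next
    case False
    then have zb: "z \<in> ball 0 1" using z by auto
    have "cmod (h z - c) \<le> 0"
      by (rule maximum_modulus_frontier[where S="ball 0 1" and f="\<lambda>z. h z - c"])
         (use assms zb in \<open>auto intro!: holomorphic_intros continuous_intros\<close>)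
    then show ?thesis by simp
  qed
qed

text \<open>Reflecting \<open>g\<close> in the circle and gluing it to \<open>f\<close> gives a bounded entire function.\<close>
lemma reflection_Liouville:
  assumes hf: "f holomorphic_on ball 0 1" and cf: "continuous_on (cball 0 1) f"
    and hg: "g holomorphic_on ball 0 1" and cg: "continuous_on (cball 0 1) g"
    and eq: "\<forall>z\<in>sphere 0 1. f z = cnj (g z)"
  shows "\<forall>z\<in>cball 0 1. f z = f 0"
proof -
  define E where "E = (\<lambda>z. if norm z \<le> 1 then f z else cnj (g (1 / cnj z)))"
  have "E holomorphic_on UNIV" unfolding E_def
  proof (rule holomorphic_on_glue_at_circle[OF hf cf])
    show "(\<lambda>z. cnj (g (1 / cnj z))) holomorphic_on {z. 1 < norm z}"
      by (rule holomorphic_on_subset[OF holomorphic_on_reflection[OF hg]])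
         (auto simp: norm_divide divide_less_eq_1)
    show "continuous_on {z. 1 \<le> norm z} (\<lambda>z. cnj (g (1 / cnj z)))"
      by (intro continuous_intros continuous_on_reflection_outside[OF cg])
    show "\<forall>z\<in>sphere 0 1. f z = cnj (g (1 / cnj z))"
      using eq by (simp add: cnj_eq_inverse_on_sphere divide_inverse)
  qed
  moreover have "bounded (range E)"
  proof -
    have "range E \<subseteq> f ` cball 0 1 \<union> cnj ` g ` cball 0 1"
      by (auto simp: E_def norm_divide divide_le_eq_1)
    moreover have "compact (f ` cball 0 1 \<union> cnj ` g ` cball 0 1)"
      by (intro compact_Un compact_continuous_image cg cf continuous_intros compact_cball)
    ultimately show ?thesis by (meson bounded_subset compact_imp_bounded)
  qed
  ultimately have "E constant_on UNIV" by (rule Liouville_theorem)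
  then have E_const: "E z = E 0" for z by (metis UNIV_I constant_on_def)
  show ?thesis
  proof
    fix z :: complex assume "z \<in> cball 0 1"
    then show "f z = f 0" using E_const[of z] by (simp add: E_def)
  qed
qed

section \<open>Plus loops\<close>

lemma plus_ext_det_eq_one:
  assumes "plus_ext V G" "\<forall>l\<in>sphere 0 1. det (V l) = 1"
  shows "\<forall>z\<in>cball 0 1. det (G z) = 1"
proof (rule holomorphic_const_on_sphere_imp_const)
  have hG: "mat_holomorphic_on G (ball 0 1)" and cG: "continuous_on (cball 0 1) G"
    and eqG: "\<forall>l\<in>sphere 0 1. G l = V l"
    using assms(1) by (auto simp: plus_ext_def)
  show "(\<lambda>z. det (G z)) holomorphic_on ball 0 1" by (rule holomorphic_on_det[OF hG])
  show "continuous_on (cball 0 1) (\<lambda>z. det (G z))" unfolding det_2 by (intro continuous_intros cG)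
  show "\<forall>z\<in>sphere 0 1. det (G z) = 1" using eqG assms(2) by simp
qed

text \<open>The twisting makes the off-diagonal entries of a plus loop odd functions of \<open>\<lambda>\<close>.\<close>
lemma plus_ext_twisted_offdiag_zero:
  assumes pe: "plus_ext V G" and tw: "twisted V" and ij: "i \<noteq> j"
  shows "G 0 $ i $ j = 0"
proof -
  have hG: "(\<lambda>z. G z $ i $ j) holomorphic_on ball 0 1" and cG: "continuous_on (cball 0 1) G"
    and eqG: "\<forall>l\<in>sphere 0 1. G l = V l"
    using pe by (auto simp: plus_ext_def mat_holomorphic_on_def)
  have "\<forall>z\<in>cball 0 1. G z $ i $ j + G (- z) $ i $ j = 0"
  proof (rule holomorphic_const_on_sphere_imp_const)
    have "(\<lambda>z. G (- z) $ i $ j) holomorphic_on ball 0 1"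
      using holomorphic_on_compose_gen[OF holomorphic_on_minus[OF holomorphic_on_id] hG]
      by (simp add: o_def image_subset_iff)
    then show "(\<lambda>z. G z $ i $ j + G (- z) $ i $ j) holomorphic_on ball 0 1"
      by (intro holomorphic_intros hG)
    have "continuous_on (cball 0 1) (\<lambda>z. G (- z))"
      by (rule continuous_on_compose2[OF cG]) (auto intro!: continuous_intros)
    then show "continuous_on (cball 0 1) (\<lambda>z. G z $ i $ j + G (- z) $ i $ j)"
      using cG by (intro continuous_intros)
    show "\<forall>z\<in>sphere 0 1. G z $ i $ j + G (- z) $ i $ j = 0"
    proof
      fix z :: complex assume z: "z \<in> sphere 0 1"
      then have "G (- z) = sigma3 ** V z ** sigma3" using eqG tw by (simp add: twisted_def)
      then show "G z $ i $ j + G (- z) $ i $ j = 0" using eqG z ij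
        by (cases i rule: exhaust_2[THEN disjE]; cases j rule: exhaust_2[THEN disjE]) auto
    qed
  qed
  then have "G 0 $ i $ j + G (- 0) $ i $ j = 0" by (metis centre_in_cball zero_le_one)
  then show ?thesis by simp
qed

lemma LoopPlusPos_det: "V \<in> LoopPlusPos \<Longrightarrow> l \<in> sphere 0 1 \<Longrightarrow> det (V l) = 1"
  by (simp add: LoopPlusPos_def LoopPlus_def LoopSL_def)

lemma LoopPlusPos_extension:
  assumes "V \<in> LoopPlusPos"
  obtains G where "plus_ext V G" "\<forall>i. G 0 $ i $ i \<in> \<real> \<and> 0 < Re (G 0 $ i $ i)"
    "\<forall>z\<in>cball 0 1. det (G z) = 1" "G 0 $ 1 $ 2 = 0" "G 0 $ 2 $ 1 = 0"
proof -
  from assms obtain G where pe: "plus_ext V G" and pos: "\<forall>i. G 0 $ i $ i \<in> \<real> \<and> 0 < Re (G 0 $ i $ i)"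
    unfolding LoopPlusPos_def by blast
  have tw: "twisted V" using assms by (simp add: LoopPlusPos_def LoopPlus_def LoopSL_def)
  show ?thesis
  proof (rule that[OF pe pos])
    show "\<forall>z\<in>cball 0 1. det (G z) = 1"
      using plus_ext_det_eq_one[OF pe] LoopPlusPos_det[OF assms] by blast
    show "G 0 $ 1 $ 2 = 0" "G 0 $ 2 $ 1 = 0"
      by (simp_all add: plus_ext_twisted_offdiag_zero[OF pe tw])
  qed
qed

lemma su11_on_sphere_imp_constant:
  assumes hW: "mat_holomorphic_on W (ball 0 1)" and cW: "continuous_on (cball 0 1) W"
    and su: "\<forall>l\<in>sphere 0 1. su11 (W l)"
  shows "\<forall>z\<in>cball 0 1. W z = W 0"
proof -
  have h: "(\<lambda>z. W z $ i $ j) holomorphic_on ball 0 1" for i j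
    by (rule mat_holomorphic_on_entry[OF hW])
  have c: "continuous_on (cball 0 1) (\<lambda>z. W z $ i $ j)" for i j
    using cW by (intro continuous_intros)
  have const: "\<forall>z\<in>cball 0 1. W z $ i $ j = W 0 $ i $ j"
    if "\<forall>z\<in>sphere 0 1. W z $ i $ j = cnj (W z $ i' $ j')" for i j i' j'
    by (rule reflection_Liouville[OF h c h c that])
  have su': "\<forall>z\<in>sphere 0 1. W z $ 1 $ 1 = cnj (W z $ 2 $ 2) \<and> W z $ 2 $ 2 = cnj (W z $ 1 $ 1)
      \<and> W z $ 2 $ 1 = cnj (W z $ 1 $ 2) \<and> W z $ 1 $ 2 = cnj (W z $ 2 $ 1)"
    using su by (auto simp: su11_def)
  have "\<forall>z\<in>cball 0 1. W z $ 1 $ 1 = W 0 $ 1 $ 1" by (rule const) (use su' in blast)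
  moreover have "\<forall>z\<in>cball 0 1. W z $ 2 $ 2 = W 0 $ 2 $ 2" by (rule const) (use su' in blast)
  moreover have "\<forall>z\<in>cball 0 1. W z $ 2 $ 1 = W 0 $ 2 $ 1" by (rule const) (use su' in blast)
  moreover have "\<forall>z\<in>cball 0 1. W z $ 1 $ 2 = W 0 $ 1 $ 2" by (rule const) (use su' in blast)
  ultimately show ?thesis unfolding cmat_eq_iff by blast
qed

text \<open>Uniqueness of the normalised plus factor: \<open>V\<^sub>2 V\<^sub>1\<^sup>-\<^sup>1\<close> is a plus loop and unitary on the circle.\<close>
lemma LoopPlusPos_unique:
  assumes V1: "V1 \<in> LoopPlusPos" and V2: "V2 \<in> LoopPlusPos"
    and su: "\<forall>l\<in>sphere 0 1. su11 (V2 l ** minv (V1 l))"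
  shows "\<forall>l\<in>sphere 0 1. V1 l = V2 l"
proof -
  obtain G1 where pe1: "plus_ext V1 G1" and pos1: "\<forall>i. G1 0 $ i $ i \<in> \<real> \<and> 0 < Re (G1 0 $ i $ i)"
    and d1: "\<forall>z\<in>cball 0 1. det (G1 z) = 1" and o1: "G1 0 $ 1 $ 2 = 0" "G1 0 $ 2 $ 1 = 0"
    by (rule LoopPlusPos_extension[OF V1])
  obtain G2 where pe2: "plus_ext V2 G2" and pos2: "\<forall>i. G2 0 $ i $ i \<in> \<real> \<and> 0 < Re (G2 0 $ i $ i)"
    and d2: "\<forall>z\<in>cball 0 1. det (G2 z) = 1" and o2: "G2 0 $ 1 $ 2 = 0" "G2 0 $ 2 $ 1 = 0"
    by (rule LoopPlusPos_extension[OF V2])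
  define W where "W = (\<lambda>z. G2 z ** adj2 (G1 z))"
  have W_sphere: "W l = V2 l ** minv (V1 l)" if "l \<in> sphere 0 1" for l
    using pe1 pe2 LoopPlusPos_det[OF V1 that] that by (simp add: W_def plus_ext_def minv_eq_adj2)
  have const: "\<forall>z\<in>cball 0 1. W z = W 0"
  proof (rule su11_on_sphere_imp_constant)
    show "mat_holomorphic_on W (ball 0 1)" unfolding W_def using pe1 pe2
      by (intro mat_holomorphic_on_mult mat_holomorphic_on_adj2) (auto simp: plus_ext_def)
    show "continuous_on (cball 0 1) W" unfolding W_def using pe1 pe2
      by (intro continuous_on_cmat_mult continuous_on_adj2) (auto simp: plus_ext_def)
    show "\<forall>l\<in>sphere 0 1. su11 (W l)" using su W_sphere by simp
  qed
  have W0: "W 0 = mat 1"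
  proof (rule su11_positive_diagonal_eq_one)
    have "su11 (W 1)" using su W_sphere[of 1] by simp
    moreover have "W 1 = W 0" using const[rule_format, of 1] by simp
    ultimately show "su11 (W 0)" by simp
    have "det (G1 0) = 1" "det (G2 0) = 1" using d1 d2 by auto
    then show "det (W 0) = 1" by (simp add: W_def det_mul det_adj2)
    show "W 0 $ 1 $ 2 = 0" "W 0 $ 2 $ 1 = 0" using o1 o2 by (simp_all add: W_def)
    have "W 0 $ 1 $ 1 = G2 0 $ 1 $ 1 * G1 0 $ 2 $ 2" using o1 by (simp add: W_def)
    then show "W 0 $ 1 $ 1 \<in> \<real>" "0 < Re (W 0 $ 1 $ 1)"
      using pos1 pos2 by (simp_all add: complex_is_Real_iff)
  qed
  have "V2 l ** minv (V1 l) = mat 1" if "l \<in> sphere 0 1" for l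
    using W_sphere[OF that] const[rule_format, of l] W0 that by simp
  moreover have "V2 l = (V2 l ** minv (V1 l)) ** V1 l" if "l \<in> sphere 0 1" for l
    using LoopPlusPos_det[OF V1 that] by (simp add: matrix_mul_assoc[symmetric] minv_left)
  ultimately show ?thesis by simp
qed

lemma mat_holomorphic_on_reflection:
  assumes "mat_holomorphic_on g A" "open A"
  shows "mat_holomorphic_on (\<lambda>z. ctr (g (1 / cnj z))) {z. z \<noteq> 0 \<and> 1 / cnj z \<in> A}"
  using assms unfolding mat_holomorphic_on_def by (auto intro!: holomorphic_on_reflection)

lemma inverse_cnj_on_sphere: "l \<in> sphere 0 1 \<Longrightarrow> 1 / cnj l = l"
  by (simp add: cnj_eq_inverse_on_sphere divide_inverse)

lemma mat_holomorphic_on_glue_at_circle: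
  assumes hG: "mat_holomorphic_on G (ball 0 1)" and cG: "continuous_on (cball 0 1) G"
    and hH: "mat_holomorphic_on H {z. 1 < norm z}" and cH: "continuous_on {z. 1 \<le> norm z} H"
    and eq: "\<forall>z\<in>sphere 0 1. G z = H z"
  shows "mat_holomorphic_on (\<lambda>z. if norm z \<le> 1 then G z else H z) UNIV"
  unfolding mat_holomorphic_on_def
proof (intro allI)
  fix i j
  have "(\<lambda>z. if norm z \<le> 1 then G z $ i $ j else H z $ i $ j) holomorphic_on UNIV"
  proof (rule holomorphic_on_glue_at_circle)
    show "(\<lambda>z. G z $ i $ j) holomorphic_on ball 0 1" by (rule mat_holomorphic_on_entry[OF hG])
    show "continuous_on (cball 0 1) (\<lambda>z. G z $ i $ j)" using cG by (intro continuous_intros)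
    show "(\<lambda>z. H z $ i $ j) holomorphic_on {z. 1 < cmod z}" by (rule mat_holomorphic_on_entry[OF hH])
    show "continuous_on {z. 1 \<le> cmod z} (\<lambda>z. H z $ i $ j)" using cH by (intro continuous_intros)
    show "\<forall>z\<in>sphere 0 1. G z $ i $ j = H z $ i $ j" using eq by simp
  qed
  moreover have "(\<lambda>z. (if norm z \<le> 1 then G z else H z) $ i $ j)
      = (\<lambda>z. if norm z \<le> 1 then G z $ i $ j else H z $ i $ j)"
    by (simp add: fun_eq_iff)
  ultimately show "(\<lambda>z. (if norm z \<le> 1 then G z else H z) $ i $ j) holomorphic_on UNIV" by simp
qed

text \<open>On the circle the relation gives \<open>V = s \<sigma>\<^sub>3 (V\<^sup>*)\<^sup>-\<^sup>1 C\<^sup>* \<sigma>\<^sub>3 C\<close>; reading \<open>V\<^sup>*(\<lambda>)\<close> as \<open>V(1/\<lambda>\<^sup>\<star>)\<^sup>*\<close>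
  turns the right-hand side into a map holomorphic outside the disc.\<close>
lemma LoopPlusPos_reflected_extension:
  assumes V: "V \<in> LoopPlusPos" and hC: "mat_holomorphic_on C (- {0})" and s: "s * s = 1"
    and rel: "\<forall>l\<in>sphere 0 1. ctr (C l) ** sigma3 ** C l = csm s (ctr (V l) ** sigma3 ** V l)"
    and pe: "plus_ext V G"
  defines "H \<equiv> \<lambda>z. csm s (sigma3 ** adj2 (ctr (G (1 / cnj z))) ** ctr (C (1 / cnj z)) ** sigma3 ** C z)"
  shows "mat_holomorphic_on H {z. 1 < norm z}" and "continuous_on {z. 1 \<le> norm z} H"
    and "\<forall>l\<in>sphere 0 1. H l = V l"
proof -
  have hG: "mat_holomorphic_on G (ball 0 1)" and cG: "continuous_on (cball 0 1) G"
    and eG: "\<forall>l\<in>sphere 0 1. G l = V l" using pe by (auto simp: plus_ext_def)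
  have "mat_holomorphic_on (\<lambda>z. ctr (G (1 / cnj z))) {z. 1 < norm z}"
    by (rule mat_holomorphic_on_subset[OF mat_holomorphic_on_reflection[OF hG]])
       (auto simp: norm_divide divide_less_eq_1)
  moreover have "mat_holomorphic_on (\<lambda>z. ctr (C (1 / cnj z))) {z. 1 < norm z}"
    by (rule mat_holomorphic_on_subset[OF mat_holomorphic_on_reflection[OF hC]]) auto
  moreover have "mat_holomorphic_on C {z. 1 < norm z}"
    by (rule mat_holomorphic_on_subset[OF hC]) auto
  ultimately show "mat_holomorphic_on H {z. 1 < norm z}" unfolding H_def
    by (intro mat_holomorphic_on_csm mat_holomorphic_on_mult mat_holomorphic_on_adj2
        mat_holomorphic_on_const holomorphic_intros)
  have cC: "continuous_on (- {0}) C" by (rule mat_holomorphic_on_imp_continuous_on[OF hC])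
  have "continuous_on {z. 1 \<le> norm z} (\<lambda>z. C (1 / cnj z))"
    by (rule continuous_on_compose2[OF cC]) (auto intro!: continuous_intros)
  moreover have "continuous_on {z. 1 \<le> norm z} C"
    by (rule continuous_on_subset[OF cC]) auto
  ultimately show "continuous_on {z. 1 \<le> norm z} H" unfolding H_def
    by (intro continuous_on_csm continuous_on_cmat_mult continuous_on_adj2 continuous_on_ctr
        continuous_on_reflection_outside[OF cG] continuous_on_const)
  show "\<forall>l\<in>sphere 0 1. H l = V l"
  proof
    fix l :: complex assume l: "l \<in> sphere 0 1"
    have dV: "det (ctr (V l)) = 1" using LoopPlusPos_det[OF V l] by (simp add: det_ctr)
    have "H l = csm s (sigma3 ** minv (ctr (V l)) ** (ctr (C l) ** sigma3 ** C l))"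
      unfolding H_def inverse_cnj_on_sphere[OF l] using eG l dV
      by (simp add: minv_eq_adj2 matrix_mul_assoc)
    also have "\<dots> = csm (s * s) (sigma3 ** (minv (ctr (V l)) ** ctr (V l)) ** sigma3 ** V l)"
      using rel l by (simp add: csm_mult_right csm_csm matrix_mul_assoc)
    also have "\<dots> = V l"
      using s dV by (simp add: minv_left matrix_mul_assoc[symmetric] sigma3_mult_sigma3)
    finally show "H l = V l" .
  qed
qed

lemma LoopPlusPos_entire_extension:
  assumes V: "V \<in> LoopPlusPos" and hC: "mat_holomorphic_on C (- {0})" and s: "s * s = 1"
    and rel: "\<forall>l\<in>sphere 0 1. ctr (C l) ** sigma3 ** C l = csm s (ctr (V l) ** sigma3 ** V l)"
  obtains Vh where "mat_holomorphic_on Vh UNIV" "\<forall>l\<in>sphere 0 1. Vh l = V l"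
proof -
  obtain G where pe: "plus_ext V G" using V by (auto simp: LoopPlusPos_def)
  define H where "H = (\<lambda>z. csm s (sigma3 ** adj2 (ctr (G (1 / cnj z))) ** ctr (C (1 / cnj z)) ** sigma3 ** C z))"
  have H_props: "mat_holomorphic_on H {z. 1 < norm z}" "continuous_on {z. 1 \<le> norm z} H"
    "\<forall>l\<in>sphere 0 1. H l = V l"
    unfolding H_def by (fact LoopPlusPos_reflected_extension[OF V hC s rel pe])+
  show ?thesis
  proof (rule that)
    show "mat_holomorphic_on (\<lambda>z. if norm z \<le> 1 then G z else H z) UNIV"
      using pe H_props by (intro mat_holomorphic_on_glue_at_circle) (auto simp: plus_ext_def)
    show "\<forall>l\<in>sphere 0 1. (if norm l \<le> 1 then G l else H l) = V l"
      using pe by (simp add: plus_ext_def)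
  qed
qed

lemma LoopSU_det: "F \<in> LoopSU \<Longrightarrow> l \<in> sphere 0 1 \<Longrightarrow> det (F l) = 1"
  by (simp add: LoopSU_def LoopSL_def)

lemma LoopSU_su11:
  assumes "F \<in> LoopSU" "l \<in> sphere 0 1"
  shows "su11 (F l)"
proof -
  have "sigma3 ** minv (ctr (F l)) ** sigma3 = F l"
    using assms by (simp add: LoopSU_def inverse_cnj_on_sphere)
  then show ?thesis using su11_iff_sigma3_conj[OF LoopSU_det[OF assms]] by simp
qed

lemma LoopSL_mult:
  assumes "M \<in> LoopSL" "F \<in> LoopSL"
  shows "(\<lambda>l. M l ** F l) \<in> LoopSL"
proof -
  have "continuous_on (sphere 0 1) (\<lambda>l. M l ** F l)"
    using assms by (intro continuous_on_cmat_mult) (auto simp: LoopSL_def)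
  moreover have "\<forall>l\<in>sphere 0 1. det (M l ** F l) = 1"
    using assms by (auto simp: LoopSL_def det_mul)
  moreover have "sigma3 ** M l ** sigma3 ** (sigma3 ** F l ** sigma3) = sigma3 ** (M l ** F l) ** sigma3" for l
    by (simp add: matrix_mul_assoc[symmetric]) (simp add: matrix_mul_assoc sigma3_mult_sigma3)
  then have "twisted (\<lambda>l. M l ** F l)" using assms by (auto simp: LoopSL_def twisted_def)
  ultimately show ?thesis by (simp add: LoopSL_def)
qed

lemma LoopSU_mult:
  assumes "M \<in> LoopSU" "F \<in> LoopSU"
  shows "(\<lambda>l. M l ** F l) \<in> LoopSU"
proof -
  have "sigma3 ** minv (ctr (M l ** F l)) ** sigma3 = M l ** F l" if l: "l \<in> sphere 0 1" for l
  proof -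
    have "det (M l ** F l) = 1" using LoopSU_det[OF assms(1) l] LoopSU_det[OF assms(2) l] by (simp add: det_mul)
    then show ?thesis
      using su11_iff_sigma3_conj su11_mult LoopSU_su11[OF assms(1) l] LoopSU_su11[OF assms(2) l] by simp
  qed
  moreover have "(\<lambda>l. M l ** F l) \<in> LoopSL" using assms by (intro LoopSL_mult) (auto simp: LoopSU_def)
  ultimately show ?thesis by (simp add: LoopSU_def inverse_cnj_on_sphere)
qed

section \<open>Iwasawa splittings\<close>

definition iwasawa_split :: "cloop \<Rightarrow> cloop \<Rightarrow> cloop \<Rightarrow> bool" where
  "iwasawa_split W C F \<longleftrightarrow> F \<in> LoopSU \<and> (\<exists>V. V \<in> LoopPlusPos \<and> (\<forall>l\<in>sphere 0 1. C l = F l ** W l ** V l))"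

definition iwasawa_frame :: "cloop \<Rightarrow> cloop \<Rightarrow> cloop" where
  "iwasawa_frame W C = (SOME F. iwasawa_split W C F)"

definition iwasawa_cell :: "complex set \<Rightarrow> cloop \<Rightarrow> (complex \<Rightarrow> cloop) \<Rightarrow> complex set" where
  "iwasawa_cell D W C = {z\<in>D. \<exists>F. iwasawa_split W (C z) F}"

text \<open>The middle factors of the two cells, \<open>W = id\<close> for \<open>\<I>\<^sub>e\<close> and \<open>W = \<omega>\<^sub>0\<close> for \<open>\<I>\<^sub>\<omega>\<close>, with the sign \<open>s\<close>
  by which \<open>W\<close> fails to preserve the form \<open>\<sigma>\<^sub>3\<close>.\<close>
definition iwasawa_middle :: "cloop \<Rightarrow> complex \<Rightarrow> bool" where
  "iwasawa_middle W s \<longleftrightarrow> s * s = 1 \<and> (\<forall>l\<in>sphere 0 1. det (W l) = 1 \<and>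
     ctr (W l) ** sigma3 ** W l = csm s sigma3 \<and> (\<forall>h. su11 h \<longrightarrow> su11 (minv (W l) ** h ** W l)))"

lemma iwasawa_middle_id: "iwasawa_middle (\<lambda>_. mat 1) 1"
  by (simp add: iwasawa_middle_def cmat_eq_iff)

lemma iwasawa_middle_omega0: "iwasawa_middle omega0 (- 1)"
proof -
  have "det (omega0 l) = 1 \<and> ctr (omega0 l) ** sigma3 ** omega0 l = csm (- 1) sigma3
      \<and> (\<forall>h. su11 h \<longrightarrow> su11 (minv (omega0 l) ** h ** omega0 l))" if l: "l \<in> sphere 0 1" for l
  proof -
    have l0: "l \<noteq> 0" using l by auto
    have c: "l * cnj l = 1" using cnj_eq_inverse_on_sphere[OF l] l0 by simp
    then have c2: "l * (l * (cnj l * cnj l)) = 1" by (metis mult.assoc mult.left_commute mult_1)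
    have "det (omega0 l) = 1" using l0 by (simp add: det_2)
    moreover have "ctr (omega0 l) ** sigma3 ** omega0 l = csm (- 1) sigma3"
      using l0 cnj_eq_inverse_on_sphere[OF l] by (simp add: cmat_eq_iff)
    moreover have "su11 (minv (omega0 l) ** h ** omega0 l)" if "su11 h" for h
      using that l0 c c2 by (simp add: su11_def det_2 field_simps)
    ultimately show ?thesis by blast
  qed
  then show ?thesis by (simp add: iwasawa_middle_def)
qed

lemma iwasawa_split_unique:
  assumes W: "iwasawa_middle W s" and F1: "iwasawa_split W C F1" and F2: "iwasawa_split W C F2"
  shows "\<forall>l\<in>sphere 0 1. F1 l = F2 l"
proof -
  obtain V1 V2 where V1: "V1 \<in> LoopPlusPos" and V2: "V2 \<in> LoopPlusPos"
    and eq: "\<forall>l\<in>sphere 0 1. F1 l ** W l ** V1 l = F2 l ** W l ** V2 l"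
    using F1 F2 by (auto simp: iwasawa_split_def)
  have dW: "det (W l) = 1" and conj: "\<And>h. su11 h \<Longrightarrow> su11 (minv (W l) ** h ** W l)"
    if "l \<in> sphere 0 1" for l
    using W that by (auto simp: iwasawa_middle_def)
  have key: "V2 l ** minv (V1 l) = minv (W l) ** (minv (F2 l) ** F1 l) ** W l" if l: "l \<in> sphere 0 1" for l
  proof -
    note ds = LoopPlusPos_det[OF V1 l] LoopSU_det[of F2, OF _ l] dW[OF l]
    have "V2 l ** minv (V1 l) = minv (W l) ** (minv (F2 l) ** (F2 l ** W l ** V2 l)) ** minv (V1 l)"
      using ds F2 by (simp add: iwasawa_split_def matrix_mul_assoc[symmetric] minv_left_cancel)
    also have "\<dots> = minv (W l) ** (minv (F2 l) ** (F1 l ** W l ** V1 l)) ** minv (V1 l)"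
      using eq l by simp
    also have "\<dots> = minv (W l) ** (minv (F2 l) ** F1 l) ** W l"
      using ds by (simp add: matrix_mul_assoc[symmetric] minv_right_cancel minv_right)
    finally show ?thesis .
  qed
  have VV: "\<forall>l\<in>sphere 0 1. V1 l = V2 l"
  proof (rule LoopPlusPos_unique[OF V1 V2], intro ballI)
    fix l :: complex assume l: "l \<in> sphere 0 1"
    have "F1 \<in> LoopSU" "F2 \<in> LoopSU" using F1 F2 by (simp_all add: iwasawa_split_def)
    then have "su11 (minv (F2 l) ** F1 l)"
      using su11_mult su11_minv LoopSU_su11 LoopSU_det l by simp
    then show "su11 (V2 l ** minv (V1 l))" unfolding key[OF l] by (rule conj[OF l])
  qed
  show ?thesis
  proof
    fix l :: complex assume l: "l \<in> sphere 0 1"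
    note ds = LoopPlusPos_det[OF V1 l] dW[OF l]
    have "F1 l = F1 l ** W l ** V1 l ** minv (V1 l) ** minv (W l)"
      using ds by (simp add: matrix_mul_assoc[symmetric] minv_right minv_right_cancel)
    also have "\<dots> = F2 l ** W l ** V1 l ** minv (V1 l) ** minv (W l)" using eq VV l by simp
    also have "\<dots> = F2 l"
      using ds by (simp add: matrix_mul_assoc[symmetric] minv_right minv_right_cancel)
    finally show "F1 l = F2 l" .
  qed
qed

lemma iwasawa_split_left_mult:
  assumes F: "iwasawa_split W C F" and M: "M \<in> LoopSU" and C': "\<forall>l\<in>sphere 0 1. C' l = M l ** C l"
  shows "iwasawa_split W C' (\<lambda>l. M l ** F l)"
proof -
  obtain V where FSU: "F \<in> LoopSU" and V: "V \<in> LoopPlusPos"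
    and C: "\<forall>l\<in>sphere 0 1. C l = F l ** W l ** V l"
    using F by (auto simp: iwasawa_split_def)
  have "\<forall>l\<in>sphere 0 1. C' l = M l ** F l ** W l ** V l"
    using C C' by (simp add: matrix_mul_assoc)
  then show ?thesis
    unfolding iwasawa_split_def using LoopSU_mult[OF M FSU] V by blast
qed

lemma iwasawa_split_reality:
  assumes W: "iwasawa_middle W s" and F: "F \<in> LoopSU"
    and C: "\<forall>l\<in>sphere 0 1. C l = F l ** W l ** V l"
  shows "\<forall>l\<in>sphere 0 1. ctr (C l) ** sigma3 ** C l = csm s (ctr (V l) ** sigma3 ** V l)"
proof
  fix l :: complex assume l: "l \<in> sphere 0 1"
  have "ctr (C l) ** sigma3 ** C l = ctr (V l) ** (ctr (W l) ** (ctr (F l) ** sigma3 ** F l) ** W l) ** V l"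
    using C l by (simp add: ctr_mult matrix_mul_assoc)
  also have "\<dots> = ctr (V l) ** (ctr (W l) ** sigma3 ** W l) ** V l"
    using su11_ctr_sigma3 LoopSU_su11[OF F l] LoopSU_det[OF F l] by simp
  also have "\<dots> = csm s (ctr (V l) ** sigma3 ** V l)"
    using W l by (simp add: iwasawa_middle_def csm_mult_left csm_mult_right matrix_mul_assoc)
  finally show "ctr (C l) ** sigma3 ** C l = csm s (ctr (V l) ** sigma3 ** V l)" .
qed

section \<open>Invariance of the Sym formula under the monodromy\<close>

text \<open>\<open>V\<close> is entire, so \<open>F\<^sub>a = C\<^sub>1 V\<^sup>-\<^sup>1\<close> and \<open>C\<^sub>2 C\<^sub>1\<^sup>-\<^sup>1\<close> are holomorphic wherever the determinants
  involved do not vanish, in particular near the circle.\<close>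
lemma symhat1_monodromy_eq_iff:
  assumes hC1: "mat_holomorphic_on C1 (- {0})" and hC2: "mat_holomorphic_on C2 (- {0})"
    and d1: "\<forall>l\<in>sphere 0 1. det (C1 l) = 1" and d2: "\<forall>l\<in>sphere 0 1. det (C2 l) = 1"
    and R1: "R 1 = mat 1" and mono: "\<forall>l\<in>sphere 0 1. C2 l = R l ** C1 l"
    and V: "V \<in> LoopPlusPos" and s: "s * s = 1"
    and rel: "\<forall>l\<in>sphere 0 1. ctr (C1 l) ** sigma3 ** C1 l = csm s (ctr (V l) ** sigma3 ** V l)"
    and Fa: "\<forall>l\<in>sphere 0 1. Fa l = C1 l ** minv (V l)"
    and Fb: "\<forall>l\<in>sphere 0 1. Fb l = R l ** Fa l"
  shows "symhat1 Fb = symhat1 Fa \<longleftrightarrow> offd (Xmon R 1) = 0 \<and> diagp (Ymon R 1) = 0"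
proof -
  obtain Vh where hV: "mat_holomorphic_on Vh UNIV" and eV: "\<forall>l\<in>sphere 0 1. Vh l = V l"
    by (rule LoopPlusPos_entire_extension[OF V hC1 s rel])
  define P where "P = (\<lambda>x. det (Vh x) * det (C1 x) * det (C2 x))"
  define S where "S = P -` (- {0}) \<inter> (- {0})"
  have "P holomorphic_on (- {0})" unfolding P_def
    by (intro holomorphic_intros holomorphic_on_det mat_holomorphic_on_subset[OF hV] hC1 hC2) auto
  then have oS: "open S" unfolding S_def
    using continuous_on_open_vimage[of "- {0}" P] holomorphic_on_imp_continuous_on by auto
  have S_iff: "x \<in> S \<longleftrightarrow> x \<noteq> 0 \<and> det (Vh x) \<noteq> 0 \<and> det (C1 x) \<noteq> 0 \<and> det (C2 x) \<noteq> 0" for x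
    by (auto simp: S_def P_def)
  have sS: "sphere 0 1 \<subseteq> S"
    using eV d1 d2 LoopPlusPos_det[OF V] by (auto simp: S_iff)
  have SS: "S \<subseteq> - {0}" using S_iff by auto
  define G where "G = (\<lambda>x. C1 x ** minv (Vh x))"
  define M where "M = (\<lambda>x. C2 x ** minv (C1 x))"
  have hG: "mat_holomorphic_on G S" unfolding G_def
    by (intro mat_holomorphic_on_mult mat_holomorphic_on_minv mat_holomorphic_on_subset[OF hC1 SS]
        mat_holomorphic_on_subset[OF hV]) (auto simp: S_iff)
  have hM: "mat_holomorphic_on M S" unfolding M_def
    by (intro mat_holomorphic_on_mult mat_holomorphic_on_minv mat_holomorphic_on_subset[OF hC2 SS]
        mat_holomorphic_on_subset[OF hC1 SS]) (auto simp: S_iff)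
  have dG: "\<forall>x\<in>S. det (G x) \<noteq> 0" by (auto simp: G_def S_iff det_mul det_minv_nonzero)
  have dM: "\<forall>x\<in>S. det (M x) \<noteq> 0" by (auto simp: M_def S_iff det_mul det_minv_nonzero)
  have RM: "\<forall>l\<in>sphere 0 1. R l = M l"
    using mono d1 by (simp add: M_def matrix_mul_assoc[symmetric] minv_right)
  have M1: "M 1 = mat 1" using RM R1 by simp
  have FaG: "\<forall>l\<in>sphere 0 1. Fa l = G l" using Fa eV by (simp add: G_def)
  have FbG: "\<forall>l\<in>sphere 0 1. Fb l = M l ** G l" using Fb FaG RM by simp
  show ?thesis by (rule symhat1_left_mult_eq_iff[OF oS sS hM hG dM dG M1 FaG FbG RM])
qed

lemma iwasawa_frame_monodromy_eq_iff:
  assumes W: "iwasawa_middle W s"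
    and C1: "C1 \<in> LoopSL" "mat_holomorphic_on C1 (- {0})"
    and C2: "C2 \<in> LoopSL" "mat_holomorphic_on C2 (- {0})"
    and mono: "\<forall>l\<in>sphere 0 1. C2 l = M l ** C1 l" and M: "M \<in> LoopSU" "M 1 = mat 1"
    and F1: "iwasawa_split W C1 F1" and F2: "iwasawa_split W C2 F2"
  shows "symhat1 (\<lambda>l. F2 l ** W l) = symhat1 (\<lambda>l. F1 l ** W l)
    \<longleftrightarrow> offd (Xmon M 1) = 0 \<and> diagp (Ymon M 1) = 0"
proof -
  obtain V where F1SU: "F1 \<in> LoopSU" and V: "V \<in> LoopPlusPos"
    and CFV: "\<forall>l\<in>sphere 0 1. C1 l = F1 l ** W l ** V l"
    using F1 by (auto simp: iwasawa_split_def)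
  have F2_eq: "\<forall>l\<in>sphere 0 1. F2 l = M l ** F1 l"
    by (rule iwasawa_split_unique[OF W F2 iwasawa_split_left_mult[OF F1 M(1) mono]])
  show ?thesis
  proof (rule symhat1_monodromy_eq_iff[OF C1(2) C2(2) _ _ M(2) mono V _
        iwasawa_split_reality[OF W F1SU CFV]])
    show "\<forall>l\<in>sphere 0 1. det (C1 l) = 1" "\<forall>l\<in>sphere 0 1. det (C2 l) = 1"
      using C1(1) C2(1) by (simp_all add: LoopSL_def)
    show "s * s = 1" using W by (simp add: iwasawa_middle_def)
    show "\<forall>l\<in>sphere 0 1. F1 l ** W l = C1 l ** minv (V l)"
      using CFV LoopPlusPos_det[OF V] by (simp add: matrix_mul_assoc[symmetric] minv_right)
    show "\<forall>l\<in>sphere 0 1. F2 l ** W l = M l ** (F1 l ** W l)"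
      using F2_eq by (simp add: matrix_mul_assoc)
  qed
qed

lemma iwasawa_cell_invariance_iff:
  assumes W: "iwasawa_middle W s"
    and maps: "\<forall>\<tau>\<in>\<Gamma>. \<forall>z\<in>D. \<tau> z \<in> D"
    and C_loop: "\<forall>z\<in>D. C z \<in> LoopSL" and C_hol: "\<forall>z\<in>D. mat_holomorphic_on (C z) (- {0})"
    and C_mono: "\<forall>\<tau>\<in>\<Gamma>. \<forall>z\<in>D. \<forall>l\<in>sphere 0 1. C (\<tau> z) l = \<rho> \<tau> l ** C z l"
    and M_SU: "\<forall>\<tau>\<in>\<Gamma>. \<rho> \<tau> \<in> LoopSU" and M_one: "\<forall>\<tau>\<in>\<Gamma>. \<rho> \<tau> 1 = mat 1"
    and cell: "iwasawa_cell D W C \<noteq> {}"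
  shows "(\<forall>\<tau>\<in>\<Gamma>. \<forall>z\<in>iwasawa_cell D W C.
            symhat1 (\<lambda>l. iwasawa_frame W (C (\<tau> z)) l ** W l) = symhat1 (\<lambda>l. iwasawa_frame W (C z) l ** W l))
     \<longleftrightarrow> (\<forall>\<tau>\<in>\<Gamma>. offd (Xmon (\<rho> \<tau>) 1) = 0 \<and> diagp (Ymon (\<rho> \<tau>) 1) = 0)"
proof -
  have "symhat1 (\<lambda>l. iwasawa_frame W (C (\<tau> z)) l ** W l) = symhat1 (\<lambda>l. iwasawa_frame W (C z) l ** W l)
      \<longleftrightarrow> offd (Xmon (\<rho> \<tau>) 1) = 0 \<and> diagp (Ymon (\<rho> \<tau>) 1) = 0"
    if \<tau>: "\<tau> \<in> \<Gamma>" and z: "z \<in> iwasawa_cell D W C" for \<tau> z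
  proof -
    obtain F where zD: "z \<in> D" and F: "iwasawa_split W (C z) F"
      using z by (auto simp: iwasawa_cell_def)
    have F1: "iwasawa_split W (C z) (iwasawa_frame W (C z))"
      unfolding iwasawa_frame_def by (rule someI[where P="iwasawa_split W (C z)", OF F])
    have mono: "\<forall>l\<in>sphere 0 1. C (\<tau> z) l = \<rho> \<tau> l ** C z l" using C_mono \<tau> zD by blast
    have F2: "iwasawa_split W (C (\<tau> z)) (iwasawa_frame W (C (\<tau> z)))"
      unfolding iwasawa_frame_def
      by (rule someI[where P="iwasawa_split W (C (\<tau> z))", OF iwasawa_split_left_mult[OF F1 _ mono]])
         (use M_SU \<tau> in blast)
    show ?thesis
      by (rule iwasawa_frame_monodromy_eq_iff[OF W _ _ _ _ mono _ _ F1 F2])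
         (use C_loop C_hol maps M_SU M_one \<tau> zD in auto)
  qed
  then show ?thesis using cell by blast
qed

lemma Ie_eq_iwasawa_cell: "Ie D C = iwasawa_cell D (\<lambda>_. mat 1) C"
  by (simp add: Ie_def iwasawa_cell_def iwasawa_split_def)

lemma Iw_eq_iwasawa_cell: "Iw D C = iwasawa_cell D omega0 C"
  by (simp add: Iw_def iwasawa_cell_def iwasawa_split_def)

lemma fhat_e_eq_iwasawa_frame: "fhat_e C z = symhat1 (\<lambda>l. iwasawa_frame (\<lambda>_. mat 1) (C z) l ** mat 1)"
  by (simp add: fhat_e_def Fe_def iwasawa_frame_def iwasawa_split_def)

lemma fhat_w_eq_iwasawa_frame: "fhat_w C z = symhat1 (\<lambda>l. iwasawa_frame omega0 (C z) l ** omega0 l)"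
  by (simp add: fhat_w_def Fw_def iwasawa_frame_def iwasawa_split_def)

theorem mainTheorem7:
  fixes D :: "complex set" and \<Gamma> :: "(complex \<Rightarrow> complex) set"
    and A :: "complex \<Rightarrow> cloop" and C :: "complex \<Rightarrow> cloop"
    and \<rho> :: "(complex \<Rightarrow> complex) \<Rightarrow> cloop"
  assumes D: "open D" "connected D" "simply_connected D"
    and deck: "deck_group D \<Gamma>" and noncpt: "noncompact_quotient D \<Gamma>"
    and A_hol_z: "\<forall>l\<in>- {0}. \<forall>i j. (\<lambda>z. A z l $ i $ j) holomorphic_on D"
    and A_hol_lambda: "\<forall>z\<in>D. mat_holomorphic_on (A z) (- {0})"
    and A_alg: "\<forall>z\<in>D. A z \<in> LoopAlg"
    and A_inv: "\<forall>\<tau>\<in>\<Gamma>. \<forall>z\<in>D. \<forall>l\<in>- {0}. csm (deriv \<tau> z) (A (\<tau> z) l) = A z l"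
    and C_loop: "\<forall>z\<in>D. C z \<in> LoopSL"
    and C_hol_lambda: "\<forall>z\<in>D. mat_holomorphic_on (C z) (- {0})"
    and C_ode: "\<forall>l\<in>- {0}. \<forall>z\<in>D. \<forall>i j.
                  ((\<lambda>w. C w l $ i $ j) has_field_derivative ((C z l ** A z l) $ i $ j)) (at z)"
    and C_mono: "\<forall>\<tau>\<in>\<Gamma>. \<forall>z\<in>D. \<forall>l\<in>sphere 0 1. C (\<tau> z) l = \<rho> \<tau> l ** C z l"
    and M_SU: "\<forall>\<tau>\<in>\<Gamma>. \<rho> \<tau> \<in> LoopSU"
    and M_one: "\<forall>\<tau>\<in>\<Gamma>. \<rho> \<tau> 1 = mat 1"
  shows "(Ie D C \<noteq> {} \<longrightarrow>
            ((\<forall>\<tau>\<in>\<Gamma>. \<forall>z\<in>Ie D C. fhat_e C (\<tau> z) = fhat_e C z) \<longleftrightarrow>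
             (\<forall>\<tau>\<in>\<Gamma>. offd (Xmon (\<rho> \<tau>) 1) = 0 \<and> diagp (Ymon (\<rho> \<tau>) 1) = 0)))
       \<and> (Iw D C \<noteq> {} \<longrightarrow>
            ((\<forall>\<tau>\<in>\<Gamma>. \<forall>z\<in>Iw D C. fhat_w C (\<tau> z) = fhat_w C z) \<longleftrightarrow>
             (\<forall>\<tau>\<in>\<Gamma>. offd (Xmon (\<rho> \<tau>) 1) = 0 \<and> diagp (Ymon (\<rho> \<tau>) 1) = 0)))"
proof -
  have maps: "\<forall>\<tau>\<in>\<Gamma>. \<forall>z\<in>D. \<tau> z \<in> D" using deck unfolding deck_group_def by blast
  note cell = iwasawa_cell_invariance_iff[OF _ maps C_loop C_hol_lambda C_mono M_SU M_one]
  show ?thesis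
    unfolding Ie_eq_iwasawa_cell Iw_eq_iwasawa_cell fhat_e_eq_iwasawa_frame fhat_w_eq_iwasawa_frame
    using cell[OF iwasawa_middle_id] cell[OF iwasawa_middle_omega0] by blast
qed

end
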